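(* The following set $\mathcal B_4$ of elements is a basis of the complex vector space $\hat{G}_{\Lambda,\Lambda_F}$: (1) all $\bar\Xi^{\lambda_1}_{\lambda_2}\otimes f^{\dot I}_{\dot J}\otimes\Xi^{\lambda_3}_{\lambda_4}$; (2) all $\bar\Xi^{\lambda_1}_{\lambda_2}\otimes l^{\dot I}_{\dot J}$ such that the last integers of $\dot I$ and $\dot J$ are not simultaneously $1$; (3) all $r^{\emptyset}_{\emptyset}\otimes\Xi^{\lambda_1}_{\lambda_2}$ with $\lambda_1\ne1$ or $\lambda_2\ne1$; (4) all $r^{I}_{\emptyset}\otimes\Xi^{\lambda_1}_{\lambda_2}$ with $\lambda_1\ne1$, or $\lambda_2\ne1$, or the first integer of $I$ not equal to $1$; (5) all $r^{\emptyset}_{J}\otimes\Xi^{\lambda_1}_{\lambda_2}$ with $\lambda_1\ne1$, or $\lambda_2\ne1$, or the first integer of $J$ not equal to $1$; (6) all $r^{I}_{J}\otimes\Xi^{\lambda_1}_{\lambda_2}$ such that the first integers of $I$ and $J$ are not simultaneously $1$; (7) $\sigma^{\emptyset}_{\emptyset}$, all $\sigma^{I}_{\emptyset}$ and all $\sigma^{\emptyset}_{J}$; (8) all $\sigma^{I}_{J}$ such that the first integers of $I$ and $J$ are not simultaneously $1$ and the last integers of $I$ and $J$ are not simultaneously $1$. Here $\dot I,\dot J$ range over all sequences, $I,J$ over non-empty sequences, and the $\lambda_i$ over $\{1,\dots,\Lambda_F\}$.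
   Context: Fix positive integers $\Lambda,\Lambda_F$. A sequence $\dot I=i_1\cdots i_a$ is a finite, possibly empty, sequence of integers in $\{1,\dots,\Lambda\}$; $\emptyset$ is the empty sequence, undotted letters $I,J$ denote non-empty sequences, juxtaposition denotes concatenation, and $\delta^{\dot I}_{\dot J}$ is $1$ if $\dot I=\dot J$ and $0$ otherwise (similarly for integers). For a sequence with a condition on "a" (the same) integer position in "both" sequences, an empty sequence has no first or last integer. Let $\mathcal{T}_o$ be the complex vector space with basis the symbols $\bar\phi^{\lambda_1}\otimes s^{\dot K}\otimes\phi^{\lambda_2}$, $1\le\lambda_1,\lambda_2\le\Lambda_F$, $\dot K$ any sequence. For all sequences $\dot I,\dot J$ and all $\lambda_i\in\{1,\dots,\Lambda_F\}$ define linear operators on $\mathcal{T}_o$ (each written as a single symbol): first kind: $\bar\Xi^{\lambda_1}_{\lambda_2}\otimes f^{\dot I}_{\dot J}\otimes\Xi^{\lambda_3}_{\lambda_4}(\bar\phi^{\lambda_5}\otimes s^{\dot K}\otimes\phi^{\lambda_6})=\delta^{\lambda_5}_{\lambda_2}\delta^{\dot K}_{\dot J}\delta^{\lambda_6}_{\lambda_4}\,\bar\phi^{\lambda_1}\otimes s^{\dot I}\otimes\phi^{\lambda_3}$; second kind: $\bar\Xi^{\lambda_1}_{\lambda_2}\otimes l^{\dot I}_{\dot J}(\bar\phi^{\lambda_3}\otimes s^{\dot K}\otimes\phi^{\lambda_4})=\delta^{\lambda_3}_{\lambda_2}\sum_{\dot K_1\dot K_2=\dot K}\delta^{\dot K_1}_{\dot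 J}\,\bar\phi^{\lambda_1}\otimes s^{\dot I\dot K_2}\otimes\phi^{\lambda_4}$; third kind: $r^{\dot I}_{\dot J}\otimes\Xi^{\lambda_1}_{\lambda_2}(\bar\phi^{\lambda_3}\otimes s^{\dot K}\otimes\phi^{\lambda_4})=\delta^{\lambda_4}_{\lambda_2}\sum_{\dot K_1\dot K_2=\dot K}\delta^{\dot K_2}_{\dot J}\,\bar\phi^{\lambda_3}\otimes s^{\dot K_1\dot I}\otimes\phi^{\lambda_1}$; fourth kind: $\sigma^{\dot I}_{\dot J}(\bar\phi^{\lambda_1}\otimes s^{\dot K}\otimes\phi^{\lambda_2})=\sum_{\dot K_1\dot K_2\dot K_3=\dot K}\delta^{\dot K_2}_{\dot J}\,\bar\phi^{\lambda_1}\otimes s^{\dot K_1\dot I\dot K_3}\otimes\phi^{\lambda_2}$; sums run over all ways to write $\dot K$ as a concatenation of possibly empty sequences. The open string algebra $\hat{G}_{\Lambda,\Lambda_F}$ is the complex Lie algebra (commutator bracket) of operators on $\mathcal{T}_o$ spanned by all operators of these four kinds. In item (2), "the last integers of $\dot I$ and $\dot J$ are not simultaneously 1" holds in particular when one of them is empty. *)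

theory Defs
  imports "HOL-Analysis.Analysis" "HOL-Library.Function_Algebras"
begin

(* A basis element  phibar^a \<otimes> s^K \<otimes> phi^b  of T_o is encoded as the triple (a, K, b). *)
type_synonym bvec = "nat \<times> nat list \<times> nat"

(* A linear operator on T_o is encoded by its matrix: A x y = coefficient of the basis
   element y in the image of the basis element x.  (Linear maps on T_o correspond
   bijectively to such column-finite matrices on the basis.) *)
type_synonym oper = "bvec \<Rightarrow> bvec \<Rightarrow> complex"

definition opscale :: "complex \<Rightarrow> oper \<Rightarrow> oper" where
  "opscale c A = (\<lambda>x y. c * A x y)"

definition seqs :: "nat \<Rightarrow> nat list set" where
  "seqs \<Lambda> = {K. set K \<subseteq> {1..\<Lambda>}}"

definition valid :: "nat \<Rightarrow> nat \<Rightarrow> bvec \<Rightarrow> bool" where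
  "valid \<Lambda> \<Lambda>F x = (case x of (a, K, b) \<Rightarrow> a \<in> {1..\<Lambda>F} \<and> K \<in> seqs \<Lambda> \<and> b \<in> {1..\<Lambda>F})"

(* first kind: Xibar^l1_l2 \<otimes> f^I_J \<otimes> Xi^l3_l4 *)
definition opF :: "nat \<Rightarrow> nat \<Rightarrow> nat \<Rightarrow> nat \<Rightarrow> nat list \<Rightarrow> nat list \<Rightarrow> nat \<Rightarrow> nat \<Rightarrow> oper" where
  "opF \<Lambda> \<Lambda>F l1 l2 I J l3 l4 = (\<lambda>(a, K, b) (c, M, d).
     if valid \<Lambda> \<Lambda>F (a, K, b) \<and> a = l2 \<and> K = J \<and> b = l4 \<and> c = l1 \<and> M = I \<and> d = l3
     then 1 else 0)"

(* second kind: Xibar^l1_l2 \<otimes> l^I_J *)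
definition opL :: "nat \<Rightarrow> nat \<Rightarrow> nat \<Rightarrow> nat \<Rightarrow> nat list \<Rightarrow> nat list \<Rightarrow> oper" where
  "opL \<Lambda> \<Lambda>F l1 l2 I J = (\<lambda>(a, K, b) (c, M, d).
     if valid \<Lambda> \<Lambda>F (a, K, b) \<and> a = l2 \<and> c = l1 \<and> d = b
     then of_nat (card {(K1, K2). K1 @ K2 = K \<and> K1 = J \<and> M = I @ K2}) else 0)"

(* third kind: r^I_J \<otimes> Xi^l1_l2 *)
definition opR :: "nat \<Rightarrow> nat \<Rightarrow> nat list \<Rightarrow> nat list \<Rightarrow> nat \<Rightarrow> nat \<Rightarrow> oper" where
  "opR \<Lambda> \<Lambda>F I J l1 l2 = (\<lambda>(a, K, b) (c, M, d).
     if valid \<Lambda> \<Lambda>F (a, K, b) \<and> b = l2 \<and> c = a \<and> d = l1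
     then of_nat (card {(K1, K2). K1 @ K2 = K \<and> K2 = J \<and> M = K1 @ I}) else 0)"

definition opS :: "nat \<Rightarrow> nat \<Rightarrow> nat list \<Rightarrow> nat list \<Rightarrow> oper" where
  "opS \<Lambda> \<Lambda>F I J = (\<lambda>(a, K, b) (c, M, d).
     if valid \<Lambda> \<Lambda>F (a, K, b) \<and> c = a \<and> d = b
     then of_nat (card {(K1, K2, K3). K1 @ K2 @ K3 = K \<and> K2 = J \<and> M = K1 @ I @ K3}) else 0)"

definition all_ops :: "nat \<Rightarrow> nat \<Rightarrow> oper set" where
  "all_ops \<Lambda> \<Lambda>F =
     {opF \<Lambda> \<Lambda>F l1 l2 I J l3 l4 | l1 l2 I J l3 l4.
        l1 \<in> {1..\<Lambda>F} \<and> l2 \<in> {1..\<Lambda>F} \<and> l3 \<in> {1..\<Lambda>F} \<and> l4 \<in> {1..\<Lambda>F} \<and> I \<in> seqs \<Lambda> \<and> J \<in> seqs \<Lambda>}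
   \<union> {opL \<Lambda> \<Lambda>F l1 l2 I J | l1 l2 I J.
        l1 \<in> {1..\<Lambda>F} \<and> l2 \<in> {1..\<Lambda>F} \<and> I \<in> seqs \<Lambda> \<and> J \<in> seqs \<Lambda>}
   \<union> {opR \<Lambda> \<Lambda>F I J l1 l2 | I J l1 l2.
        l1 \<in> {1..\<Lambda>F} \<and> l2 \<in> {1..\<Lambda>F} \<and> I \<in> seqs \<Lambda> \<and> J \<in> seqs \<Lambda>}
   \<union> {opS \<Lambda> \<Lambda>F I J | I J. I \<in> seqs \<Lambda> \<and> J \<in> seqs \<Lambda>}"

definition Ghat :: "nat \<Rightarrow> nat \<Rightarrow> oper set" where
  "Ghat \<Lambda> \<Lambda>F = module.span opscale (all_ops \<Lambda> \<Lambda>F)"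

(* "the last integers of I and J are simultaneously 1" (false if one is empty) *)
definition last_both_one :: "nat list \<Rightarrow> nat list \<Rightarrow> bool" where
  "last_both_one I J \<longleftrightarrow> I \<noteq> [] \<and> J \<noteq> [] \<and> last I = 1 \<and> last J = 1"

definition first_both_one :: "nat list \<Rightarrow> nat list \<Rightarrow> bool" where
  "first_both_one I J \<longleftrightarrow> I \<noteq> [] \<and> J \<noteq> [] \<and> hd I = 1 \<and> hd J = 1"

definition B4 :: "nat \<Rightarrow> nat \<Rightarrow> oper set" where
  "B4 \<Lambda> \<Lambda>F =
     \<comment> \<open>(1)\<close>
     {opF \<Lambda> \<Lambda>F l1 l2 I J l3 l4 | l1 l2 I J l3 l4.
        l1 \<in> {1..\<Lambda>F} \<and> l2 \<in> {1..\<Lambda>F} \<and> l3 \<in> {1..\<Lambda>F} \<and> l4 \<in> {1..\<Lambda>F} \<and> I \<in> seqs \<Lambda> \<and> J \<in> seqs \<Lambda>}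
     \<comment> \<open>(2)\<close>
   \<union> {opL \<Lambda> \<Lambda>F l1 l2 I J | l1 l2 I J.
        l1 \<in> {1..\<Lambda>F} \<and> l2 \<in> {1..\<Lambda>F} \<and> I \<in> seqs \<Lambda> \<and> J \<in> seqs \<Lambda> \<and> \<not> last_both_one I J}
     \<comment> \<open>(3)\<close>
   \<union> {opR \<Lambda> \<Lambda>F [] [] l1 l2 | l1 l2.
        l1 \<in> {1..\<Lambda>F} \<and> l2 \<in> {1..\<Lambda>F} \<and> (l1 \<noteq> 1 \<or> l2 \<noteq> 1)}
     \<comment> \<open>(4)\<close>
   \<union> {opR \<Lambda> \<Lambda>F I [] l1 l2 | I l1 l2.
        l1 \<in> {1..\<Lambda>F} \<and> l2 \<in> {1..\<Lambda>F} \<and> I \<in> seqs \<Lambda> \<and> I \<noteq> [] \<and> (l1 \<noteq> 1 \<or> l2 \<noteq> 1 \<or> hd I \<noteq> 1)}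
     \<comment> \<open>(5)\<close>
   \<union> {opR \<Lambda> \<Lambda>F [] J l1 l2 | J l1 l2.
        l1 \<in> {1..\<Lambda>F} \<and> l2 \<in> {1..\<Lambda>F} \<and> J \<in> seqs \<Lambda> \<and> J \<noteq> [] \<and> (l1 \<noteq> 1 \<or> l2 \<noteq> 1 \<or> hd J \<noteq> 1)}
     \<comment> \<open>(6)\<close>
   \<union> {opR \<Lambda> \<Lambda>F I J l1 l2 | I J l1 l2.
        l1 \<in> {1..\<Lambda>F} \<and> l2 \<in> {1..\<Lambda>F} \<and> I \<in> seqs \<Lambda> \<and> J \<in> seqs \<Lambda> \<and> I \<noteq> [] \<and> J \<noteq> []
        \<and> \<not> first_both_one I J}
     \<comment> \<open>(7)\<close>
   \<union> {opS \<Lambda> \<Lambda>F [] []}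
   \<union> {opS \<Lambda> \<Lambda>F I [] | I. I \<in> seqs \<Lambda> \<and> I \<noteq> []}
   \<union> {opS \<Lambda> \<Lambda>F [] J | J. J \<in> seqs \<Lambda> \<and> J \<noteq> []}
     \<comment> \<open>(8)\<close>
   \<union> {opS \<Lambda> \<Lambda>F I J | I J. I \<in> seqs \<Lambda> \<and> J \<in> seqs \<Lambda> \<and> I \<noteq> [] \<and> J \<noteq> []
        \<and> \<not> first_both_one I J \<and> \<not> last_both_one I J}"

end

theory Submission
  imports Defs
begin

(* Operators are handled through their matrices on the basis phibar (x) s^K (x) phi, so everything
   reduces to counting ways of rewriting a word K into a word M.

   Spanning: the identities
     l^I_J = f^I_J (x) 1 + sum_k l^{Ik}_{Jk},        r^I_J = 1 (x) f^I_J + sum_k r^{kI}_{kJ},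
     sigma^I_J = sum_mu Xibar^mu_mu (x) l^I_J + sum_k sigma^{kI}_{kJ}
               = sum_mu r^I_J (x) Xi^mu_mu + sum_k sigma^{Ik}_{Jk},
   and the fact that sum_mu r^{}_{} (x) Xi^mu_mu and sum_mu Xibar^mu_mu (x) l^{}_{} are both the
   identity, allow one to solve for each operator whose indices start (or end) with 1 on both
   sides in terms of operators with shorter indices and elements of B4.

   Independence: from a vanishing finite combination of elements of B4 we extract the
   coefficients one kind at a time (r (x) Xi^1_1, then sigma, l, r and f) by linear functionals
   built from matrix entries.  They evaluate at words padded by a long run of 1s, which makes the
   input too long for any f (and, after a difference in the last letter, for any l), while
   admissibility guarantees that the padding creates no new matches; differences in the first
   or last letter then turn the counts of prefix and suffix replacements into Kronecker deltas. *)

interpretation Op: module opscale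
  by standard (auto simp: opscale_def fun_eq_iff algebra_simps)

lemma sum_fun_apply: "(\<Sum>a\<in>A. f a) x = (\<Sum>a\<in>A. f a x)"
  by (induction A rule: infinite_finite_induct) auto

lemma seqs_iff: "K \<in> seqs \<Lambda> \<longleftrightarrow> set K \<subseteq> {1..\<Lambda>}"
  by (simp add: seqs_def)

lemma seqs_Nil [simp]: "[] \<in> seqs \<Lambda>"
  and seqs_Cons [simp]: "k # K \<in> seqs \<Lambda> \<longleftrightarrow> k \<in> {1..\<Lambda>} \<and> K \<in> seqs \<Lambda>"
  and seqs_append [simp]: "K @ L \<in> seqs \<Lambda> \<longleftrightarrow> K \<in> seqs \<Lambda> \<and> L \<in> seqs \<Lambda>"
  by (auto simp: seqs_def)

lemma seqs_tl: "K \<in> seqs \<Lambda> \<Longrightarrow> tl K \<in> seqs \<Lambda>"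
  by (cases K) auto

lemma seqs_butlast: "K \<in> seqs \<Lambda> \<Longrightarrow> butlast K \<in> seqs \<Lambda>"
  by (auto simp: seqs_def dest: in_set_butlastD)

lemma replicate_one_in_seqs: "1 \<le> \<Lambda> \<Longrightarrow> replicate n 1 \<in> seqs \<Lambda>"
  by (auto simp: seqs_def)

section \<open>Replacing a prefix, a suffix or a factor of a word\<close>

definition replaces_prefix :: "nat list \<Rightarrow> nat list \<Rightarrow> nat list \<Rightarrow> nat list \<Rightarrow> bool" where
  "replaces_prefix I J K M \<longleftrightarrow> (\<exists>X. K = J @ X \<and> M = I @ X)"

definition replaces_suffix :: "nat list \<Rightarrow> nat list \<Rightarrow> nat list \<Rightarrow> nat list \<Rightarrow> bool" where
  "replaces_suffix I J K M \<longleftrightarrow> (\<exists>X. K = X @ J \<and> M = X @ I)"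

definition replacements ::
    "nat list \<Rightarrow> nat list \<Rightarrow> nat list \<Rightarrow> nat list \<Rightarrow> (nat list \<times> nat list \<times> nat list) set" where
  "replacements I J K M = {(K1, K2, K3). K1 @ K2 @ K3 = K \<and> K2 = J \<and> M = K1 @ I @ K3}"

lemma replaces_suffix_rev:
  "replaces_suffix I J K M \<longleftrightarrow> replaces_prefix (rev I) (rev J) (rev K) (rev M)"
  unfolding replaces_prefix_def replaces_suffix_def
  by (metis rev_append rev_rev_ident)

lemma replaces_prefix_length: "replaces_prefix I J K M \<Longrightarrow> length J \<le> length K"
  by (auto simp: replaces_prefix_def)

lemma replaces_suffix_length: "replaces_suffix I J K M \<Longrightarrow> length J \<le> length K"
  by (auto simp: replaces_suffix_def)

lemma replaces_prefix_snoc_snoc: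
  "replaces_prefix I J (K @ [k]) (M @ [k]) \<longleftrightarrow>
     replaces_prefix I J K M \<or> (K @ [k] = J \<and> M @ [k] = I)"
proof
  assume "replaces_prefix I J (K @ [k]) (M @ [k])"
  then obtain X where X: "K @ [k] = J @ X" "M @ [k] = I @ X" by (auto simp: replaces_prefix_def)
  show "replaces_prefix I J K M \<or> (K @ [k] = J \<and> M @ [k] = I)"
  proof (cases X rule: rev_cases)
    case (snoc X' x)
    then show ?thesis using X by (auto simp: replaces_prefix_def)
  qed (use X in simp)
qed (auto simp: replaces_prefix_def)

lemma replaces_suffix_Cons_Cons:
  "replaces_suffix I J (k # K) (k # M) \<longleftrightarrow>
     replaces_suffix I J K M \<or> (k # K = J \<and> k # M = I)"
  unfolding replaces_suffix_def by (auto simp: Cons_eq_append_conv)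

lemma replaces_prefix_snoc_pattern:
  "replaces_prefix (I @ [k]) (J @ [k]) K M \<longleftrightarrow>
     replaces_prefix I J K M \<and> length J < length K \<and> K ! length J = k"
proof
  assume "replaces_prefix I J K M \<and> length J < length K \<and> K ! length J = k"
  then obtain X where X: "K = J @ X" "M = I @ X" "length J < length K" "K ! length J = k"
    by (auto simp: replaces_prefix_def)
  then obtain X' where "X = k # X'" by (cases X) auto
  with X show "replaces_prefix (I @ [k]) (J @ [k]) K M" by (auto simp: replaces_prefix_def)
qed (auto simp: replaces_prefix_def nth_append)

lemma sum_of_bool_unique:
  assumes "finite A" "\<And>k. P k \<Longrightarrow> k = x" "P x \<Longrightarrow> x \<in> A"
  shows "(\<Sum>k\<in>A. of_bool (P k)) = (of_bool (P x) :: 'a::semiring_1)"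
proof -
  have "(\<Sum>k\<in>A. of_bool (P k)) = (\<Sum>k\<in>A. if k = x then (of_bool (P x) :: 'a) else 0)"
    using assms(2) by (intro sum.cong) auto
  then show ?thesis using assms(1,3) by (cases "P x") (simp_all add: sum.delta)
qed

lemma replaces_prefix_expansion:
  assumes "set K \<subseteq> A" "finite A"
  shows "(of_bool (replaces_prefix I J K M) :: 'a::semiring_1) =
    of_bool (K = J \<and> M = I) + (\<Sum>k\<in>A. of_bool (replaces_prefix (I @ [k]) (J @ [k]) K M))"
proof -
  have "(\<Sum>k\<in>A. of_bool (replaces_prefix (I @ [k]) (J @ [k]) K M)) =
      (of_bool (replaces_prefix (I @ [K ! length J]) (J @ [K ! length J]) K M) :: 'a)"
    using assms by (intro sum_of_bool_unique) (auto simp: replaces_prefix_snoc_pattern)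
  also have "\<dots> = of_bool (replaces_prefix I J K M \<and> length J < length K)"
    by (simp add: replaces_prefix_snoc_pattern)
  finally show ?thesis
    by (auto simp: replaces_prefix_def)
qed

lemma replaces_suffix_expansion:
  assumes "set K \<subseteq> A" "finite A"
  shows "(of_bool (replaces_suffix I J K M) :: 'a::semiring_1) =
    of_bool (K = J \<and> M = I) + (\<Sum>k\<in>A. of_bool (replaces_suffix (k # I) (k # J) K M))"
  using assms replaces_prefix_expansion[of "rev K" A "rev I" "rev J" "rev M"]
  by (simp add: replaces_suffix_rev)

lemma finite_replacements: "finite (replacements I J K M)"
proof (rule finite_subset)
  show "replacements I J K M \<subseteq> (\<lambda>i. (take i K, J, drop (i + length J) K)) ` {0..length K}"
  proof
    fix z assume "z \<in> replacements I J K M"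
    then obtain K1 K3 where "z = (K1, J, K3)" "K = K1 @ J @ K3" by (auto simp: replacements_def)
    then show "z \<in> (\<lambda>i. (take i K, J, drop (i + length J) K)) ` {0..length K}"
      by (intro image_eqI[where x = "length K1"]) auto
  qed
qed simp

lemma card_replacements_expansion_left:
  assumes "set K \<subseteq> A" "finite A"
  shows "card (replacements I J K M) =
    of_bool (replaces_prefix I J K M) + (\<Sum>k\<in>A. card (replacements (k # I) (k # J) K M))"
proof -
  define P where "P = {([] :: nat list, J, X) | X. K = J @ X \<and> M = I @ X}"
  define Q where "Q = (\<lambda>(k, K1, K2, K3). (K1 @ [k], J, K3)) ` (SIGMA k:A. replacements (k # I) (k # J) K M)"
  have split: "replacements I J K M = P \<union> Q"
  proof (intro set_eqI iffI)
    fix z assume "z \<in> replacements I J K M"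
    then obtain K1 K3 where z: "z = (K1, J, K3)" "K = K1 @ J @ K3" "M = K1 @ I @ K3"
      by (auto simp: replacements_def)
    show "z \<in> P \<union> Q"
    proof (cases K1 rule: rev_cases)
      case Nil
      then show ?thesis using z by (auto simp: P_def)
    next
      case (snoc K1' k)
      then have "(k, K1', k # J, K3) \<in> (SIGMA k:A. replacements (k # I) (k # J) K M)"
        using z assms(1) by (auto simp: replacements_def)
      then show ?thesis using z snoc unfolding Q_def by (auto intro!: image_eqI)
    qed
  qed (auto simp: replacements_def P_def Q_def)
  have card_P: "card P = of_bool (replaces_prefix I J K M)"
  proof (cases "replaces_prefix I J K M")
    case True
    then obtain X where "K = J @ X" "M = I @ X" by (auto simp: replaces_prefix_def)
    then have "P = {([], J, X)}" by (auto simp: P_def)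
    then show ?thesis using True by simp
  next
    case False
    then have "P = {}" by (auto simp: P_def replaces_prefix_def)
    then show ?thesis using False by simp
  qed
  have "inj_on (\<lambda>(k, K1, K2, K3). (K1 @ [k], J, K3)) (SIGMA k:A. replacements (k # I) (k # J) K M)"
    by (auto simp: inj_on_def replacements_def)
  then have card_Q: "card Q = (\<Sum>k\<in>A. card (replacements (k # I) (k # J) K M))"
    using assms(2) by (simp add: Q_def card_image card_SigmaI finite_replacements)
  have "finite (P \<union> Q)"
    using finite_replacements[of I J K M] by (simp only: split)
  moreover have "P \<inter> Q = {}" by (auto simp: P_def Q_def)
  ultimately have "card (P \<union> Q) = card P + card Q" by (simp add: card_Un_disjoint)
  then show ?thesis by (simp only: split card_P card_Q)
qed

lemma card_replacements_rev:
  "card (replacements (rev I) (rev J) (rev K) (rev M)) = card (replacements I J K M)"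
proof -
  have "replacements (rev I) (rev J) (rev K) (rev M) =
      (\<lambda>(K1, K2, K3). (rev K3, rev K2, rev K1)) ` replacements I J K M"
  proof (intro set_eqI iffI)
    fix z assume "z \<in> replacements (rev I) (rev J) (rev K) (rev M)"
    then obtain K1 K3 where "z = (K1, rev J, K3)" "rev K = K1 @ rev J @ K3" "rev M = K1 @ rev I @ K3"
      by (auto simp: replacements_def)
    then show "z \<in> (\<lambda>(K1, K2, K3). (rev K3, rev K2, rev K1)) ` replacements I J K M"
      by (intro image_eqI[where x = "(rev K3, J, rev K1)"]) (auto simp: replacements_def rev_swap)
  qed (auto simp: replacements_def)
  moreover have "inj_on (\<lambda>(K1, K2, K3). (rev K3, rev K2, rev K1)) (replacements I J K M)"
    by (auto simp: inj_on_def)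
  ultimately show ?thesis by (simp add: card_image)
qed

lemma card_replacements_expansion_right:
  assumes "set K \<subseteq> A" "finite A"
  shows "card (replacements I J K M) =
    of_bool (replaces_suffix I J K M) + (\<Sum>k\<in>A. card (replacements (I @ [k]) (J @ [k]) K M))"
proof -
  have "card (replacements (k # rev I) (k # rev J) (rev K) (rev M)) =
      card (replacements (I @ [k]) (J @ [k]) K M)" for k
    using card_replacements_rev[of "I @ [k]" "J @ [k]" K M] by simp
  then show ?thesis
    using assms card_replacements_expansion_left[of "rev K" A "rev I" "rev J" "rev M"]
    by (simp add: card_replacements_rev replaces_suffix_rev)
qed

lemma card_replacements_butlast:
  "card (replacements I J K M) = of_bool (replaces_suffix I J K M) +
     (if K \<noteq> [] \<and> M \<noteq> [] \<and> last K = last M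
      then card (replacements I J (butlast K) (butlast M)) else 0)"
proof -
  define P where "P = {(X, J, [] :: nat list) | X. K = X @ J \<and> M = X @ I}"
  define Q where "Q = (\<lambda>(K1, K2, K3). (K1, K2, K3 @ [last K])) `
    (if K \<noteq> [] \<and> M \<noteq> [] \<and> last K = last M then replacements I J (butlast K) (butlast M) else {})"
  have split: "replacements I J K M = P \<union> Q"
  proof (intro set_eqI iffI)
    fix z assume "z \<in> replacements I J K M"
    then obtain K1 K3 where z: "z = (K1, J, K3)" "K = K1 @ J @ K3" "M = K1 @ I @ K3"
      by (auto simp: replacements_def)
    show "z \<in> P \<union> Q"
    proof (cases K3 rule: rev_cases)
      case Nil
      then show ?thesis using z by (auto simp: P_def)
    next
      case (snoc K3' k)
      then show ?thesis using z unfolding Q_def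
        by (intro UnI2 image_eqI[where x = "(K1, J, K3')"]) (auto simp: replacements_def butlast_append)
    qed
  next
    fix z assume "z \<in> P \<union> Q"
    then show "z \<in> replacements I J K M"
      by (auto simp: P_def Q_def replacements_def split: if_splits)
        (metis append_butlast_last_id append_assoc)+
  qed
  have card_P: "card P = of_bool (replaces_suffix I J K M)"
  proof (cases "replaces_suffix I J K M")
    case True
    then obtain X where "K = X @ J" "M = X @ I" by (auto simp: replaces_suffix_def)
    then have "P = {(X, J, [])}" by (auto simp: P_def)
    then show ?thesis using True by simp
  next
    case False
    then have "P = {}" by (auto simp: P_def replaces_suffix_def)
    then show ?thesis using False by simp
  qed
  have card_Q: "card Q = (if K \<noteq> [] \<and> M \<noteq> [] \<and> last K = last M
      then card (replacements I J (butlast K) (butlast M)) else 0)"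
    unfolding Q_def by (subst card_image) (auto simp: inj_on_def)
  have "finite (P \<union> Q)"
    using finite_replacements[of I J K M] by (simp only: split)
  moreover have "P \<inter> Q = {}" by (auto simp: P_def Q_def split: if_splits)
  ultimately have "card (P \<union> Q) = card P + card Q" by (simp add: card_Un_disjoint)
  then show ?thesis by (simp only: split card_P card_Q)
qed

section \<open>Matrix entries and linear relations\<close>

lemma valid_iff: "valid \<Lambda> \<Lambda>F (a, K, b) \<longleftrightarrow> a \<in> {1..\<Lambda>F} \<and> K \<in> seqs \<Lambda> \<and> b \<in> {1..\<Lambda>F}"
  by (simp add: valid_def)

lemma opF_apply:
  "opF \<Lambda> \<Lambda>F l1 l2 I J l3 l4 (a, K, b) (c, M, d) =
    of_bool (valid \<Lambda> \<Lambda>F (a, K, b) \<and> a = l2 \<and> K = J \<and> b = l4 \<and> c = l1 \<and> M = I \<and> d = l3)"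
  by (auto simp: opF_def)

lemma opF_apply_long: "length J < length K \<Longrightarrow> opF \<Lambda> \<Lambda>F l1 l2 I J l3 l4 (a, K, b) (c, M, d) = 0"
  by (auto simp: opF_apply)

lemma opL_apply:
  "opL \<Lambda> \<Lambda>F l1 l2 I J (a, K, b) (c, M, d) =
    of_bool (valid \<Lambda> \<Lambda>F (a, K, b) \<and> a = l2 \<and> c = l1 \<and> d = b \<and> replaces_prefix I J K M)"
proof -
  have "{(K1, K2). K1 @ K2 = K \<and> K1 = J \<and> M = I @ K2} =
      (if replaces_prefix I J K M then {(J, drop (length J) K)} else {})"
    by (auto simp: replaces_prefix_def)
  then show ?thesis by (auto simp: opL_def)
qed

lemma opR_apply:
  "opR \<Lambda> \<Lambda>F I J l1 l2 (a, K, b) (c, M, d) =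
    of_bool (valid \<Lambda> \<Lambda>F (a, K, b) \<and> b = l2 \<and> c = a \<and> d = l1 \<and> replaces_suffix I J K M)"
proof -
  have "{(K1, K2). K1 @ K2 = K \<and> K2 = J \<and> M = K1 @ I} =
      (if replaces_suffix I J K M then {(take (length K - length J) K, J)} else {})"
    by (auto simp: replaces_suffix_def)
  then show ?thesis by (auto simp: opR_def)
qed

lemma opS_apply:
  "opS \<Lambda> \<Lambda>F I J (a, K, b) (c, M, d) =
    of_bool (valid \<Lambda> \<Lambda>F (a, K, b) \<and> c = a \<and> d = b) * of_nat (card (replacements I J K M))"
  by (simp add: opS_def replacements_def)

lemma sum_opF_diag_right_apply:
  "(\<Sum>\<mu>\<in>{1..\<Lambda>F}. opF \<Lambda> \<Lambda>F l1 l2 I J \<mu> \<mu>) (a, K, b) (c, M, d) =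
    of_bool (valid \<Lambda> \<Lambda>F (a, K, b) \<and> a = l2 \<and> c = l1 \<and> d = b \<and> K = J \<and> M = I)"
  unfolding sum_fun_apply opF_apply
  by (subst sum_of_bool_unique[where x = b]) (auto simp: valid_iff)

lemma sum_opF_diag_left_apply:
  "(\<Sum>\<mu>\<in>{1..\<Lambda>F}. opF \<Lambda> \<Lambda>F \<mu> \<mu> I J l1 l2) (a, K, b) (c, M, d) =
    of_bool (valid \<Lambda> \<Lambda>F (a, K, b) \<and> b = l2 \<and> c = a \<and> d = l1 \<and> K = J \<and> M = I)"
  unfolding sum_fun_apply opF_apply
  by (subst sum_of_bool_unique[where x = a]) (auto simp: valid_iff)

lemma sum_opL_diag_apply:
  "(\<Sum>\<mu>\<in>{1..\<Lambda>F}. opL \<Lambda> \<Lambda>F \<mu> \<mu> I J) (a, K, b) (c, M, d) =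
    of_bool (valid \<Lambda> \<Lambda>F (a, K, b) \<and> c = a \<and> d = b \<and> replaces_prefix I J K M)"
  unfolding sum_fun_apply opL_apply
  by (subst sum_of_bool_unique[where x = a]) (auto simp: valid_iff)

lemma sum_opR_diag_apply:
  "(\<Sum>\<mu>\<in>{1..\<Lambda>F}. opR \<Lambda> \<Lambda>F I J \<mu> \<mu>) (a, K, b) (c, M, d) =
    of_bool (valid \<Lambda> \<Lambda>F (a, K, b) \<and> c = a \<and> d = b \<and> replaces_suffix I J K M)"
  unfolding sum_fun_apply opR_apply
  by (subst sum_of_bool_unique[where x = b]) (auto simp: valid_iff)

lemma sum_opR_Nil_Nil_eq_sum_opL_Nil_Nil:
  "(\<Sum>\<mu>\<in>{1..\<Lambda>F}. opR \<Lambda> \<Lambda>F [] [] \<mu> \<mu>) = (\<Sum>\<mu>\<in>{1..\<Lambda>F}. opL \<Lambda> \<Lambda>F \<mu> \<mu> [] [])"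
proof (intro ext)
  fix x y :: bvec
  obtain a K b c M d where xy: "x = (a, K, b)" "y = (c, M, d)" by (cases x, cases y)
  show "(\<Sum>\<mu>\<in>{1..\<Lambda>F}. opR \<Lambda> \<Lambda>F [] [] \<mu> \<mu>) x y = (\<Sum>\<mu>\<in>{1..\<Lambda>F}. opL \<Lambda> \<Lambda>F \<mu> \<mu> [] []) x y"
    unfolding xy sum_opR_diag_apply sum_opL_diag_apply
    by (simp add: replaces_prefix_def replaces_suffix_def)
qed

lemma opL_expansion:
  "opL \<Lambda> \<Lambda>F l1 l2 I J =
    (\<Sum>\<mu>\<in>{1..\<Lambda>F}. opF \<Lambda> \<Lambda>F l1 l2 I J \<mu> \<mu>) + (\<Sum>k\<in>{1..\<Lambda>}. opL \<Lambda> \<Lambda>F l1 l2 (I @ [k]) (J @ [k]))"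
proof (intro ext)
  fix x y :: bvec
  obtain a K b c M d where xy: "x = (a, K, b)" "y = (c, M, d)" by (cases x, cases y)
  show "opL \<Lambda> \<Lambda>F l1 l2 I J x y = ((\<Sum>\<mu>\<in>{1..\<Lambda>F}. opF \<Lambda> \<Lambda>F l1 l2 I J \<mu> \<mu>) +
      (\<Sum>k\<in>{1..\<Lambda>}. opL \<Lambda> \<Lambda>F l1 l2 (I @ [k]) (J @ [k]))) x y"
  proof (cases "valid \<Lambda> \<Lambda>F x \<and> a = l2 \<and> c = l1 \<and> d = b")
    case True
    then have "set K \<subseteq> {1..\<Lambda>}" by (simp add: xy valid_iff seqs_iff)
    moreover have "(\<Sum>\<mu>\<in>{1..\<Lambda>F}. opF \<Lambda> \<Lambda>F l1 l2 I J \<mu> \<mu>) x y = of_bool (K = J \<and> M = I)"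
      using True unfolding xy sum_opF_diag_right_apply by auto
    moreover have "(\<Sum>k\<in>{1..\<Lambda>}. opL \<Lambda> \<Lambda>F l1 l2 (I @ [k]) (J @ [k])) x y =
        (\<Sum>k\<in>{1..\<Lambda>}. of_bool (replaces_prefix (I @ [k]) (J @ [k]) K M))"
      using True unfolding sum_fun_apply by (intro sum.cong) (auto simp: xy opL_apply)
    moreover have "opL \<Lambda> \<Lambda>F l1 l2 I J x y = of_bool (replaces_prefix I J K M)"
      using True by (auto simp: xy opL_apply)
    ultimately show ?thesis
      unfolding plus_fun_apply
      using replaces_prefix_expansion[of K "{1..\<Lambda>}" I J M] by simp
  next
    case False
    then have "opL \<Lambda> \<Lambda>F l1 l2 (I @ [k]) (J @ [k]) x y = 0" for k
      by (auto simp: xy opL_apply)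
    with False show ?thesis
      unfolding xy plus_fun_apply sum_opF_diag_right_apply by (auto simp: sum_fun_apply opL_apply)
  qed
qed

lemma opR_expansion:
  "opR \<Lambda> \<Lambda>F I J l1 l2 =
    (\<Sum>\<mu>\<in>{1..\<Lambda>F}. opF \<Lambda> \<Lambda>F \<mu> \<mu> I J l1 l2) + (\<Sum>k\<in>{1..\<Lambda>}. opR \<Lambda> \<Lambda>F (k # I) (k # J) l1 l2)"
proof (intro ext)
  fix x y :: bvec
  obtain a K b c M d where xy: "x = (a, K, b)" "y = (c, M, d)" by (cases x, cases y)
  show "opR \<Lambda> \<Lambda>F I J l1 l2 x y = ((\<Sum>\<mu>\<in>{1..\<Lambda>F}. opF \<Lambda> \<Lambda>F \<mu> \<mu> I J l1 l2) +
      (\<Sum>k\<in>{1..\<Lambda>}. opR \<Lambda> \<Lambda>F (k # I) (k # J) l1 l2)) x y"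
  proof (cases "valid \<Lambda> \<Lambda>F x \<and> b = l2 \<and> c = a \<and> d = l1")
    case True
    then have "set K \<subseteq> {1..\<Lambda>}" by (simp add: xy valid_iff seqs_iff)
    moreover have "(\<Sum>\<mu>\<in>{1..\<Lambda>F}. opF \<Lambda> \<Lambda>F \<mu> \<mu> I J l1 l2) x y = of_bool (K = J \<and> M = I)"
      using True unfolding xy sum_opF_diag_left_apply by auto
    moreover have "(\<Sum>k\<in>{1..\<Lambda>}. opR \<Lambda> \<Lambda>F (k # I) (k # J) l1 l2) x y =
        (\<Sum>k\<in>{1..\<Lambda>}. of_bool (replaces_suffix (k # I) (k # J) K M))"
      using True unfolding sum_fun_apply by (intro sum.cong) (auto simp: xy opR_apply)
    moreover have "opR \<Lambda> \<Lambda>F I J l1 l2 x y = of_bool (replaces_suffix I J K M)"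
      using True by (auto simp: xy opR_apply)
    ultimately show ?thesis
      unfolding plus_fun_apply
      using replaces_suffix_expansion[of K "{1..\<Lambda>}" I J M] by simp
  next
    case False
    then have "opR \<Lambda> \<Lambda>F (k # I) (k # J) l1 l2 x y = 0" for k
      by (auto simp: xy opR_apply)
    with False show ?thesis
      unfolding xy plus_fun_apply sum_opF_diag_left_apply by (auto simp: sum_fun_apply opR_apply)
  qed
qed

lemma opS_expansion_left:
  "opS \<Lambda> \<Lambda>F I J =
    (\<Sum>\<mu>\<in>{1..\<Lambda>F}. opL \<Lambda> \<Lambda>F \<mu> \<mu> I J) + (\<Sum>k\<in>{1..\<Lambda>}. opS \<Lambda> \<Lambda>F (k # I) (k # J))"
proof (intro ext)
  fix x y :: bvec
  obtain a K b c M d where xy: "x = (a, K, b)" "y = (c, M, d)" by (cases x, cases y)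
  show "opS \<Lambda> \<Lambda>F I J x y = ((\<Sum>\<mu>\<in>{1..\<Lambda>F}. opL \<Lambda> \<Lambda>F \<mu> \<mu> I J) +
      (\<Sum>k\<in>{1..\<Lambda>}. opS \<Lambda> \<Lambda>F (k # I) (k # J))) x y"
  proof (cases "valid \<Lambda> \<Lambda>F x \<and> c = a \<and> d = b")
    case True
    then have "set K \<subseteq> {1..\<Lambda>}" by (simp add: xy valid_iff seqs_iff)
    moreover have "(\<Sum>\<mu>\<in>{1..\<Lambda>F}. opL \<Lambda> \<Lambda>F \<mu> \<mu> I J) x y = of_bool (replaces_prefix I J K M)"
      using True unfolding xy sum_opL_diag_apply by auto
    moreover have "(\<Sum>k\<in>{1..\<Lambda>}. opS \<Lambda> \<Lambda>F (k # I) (k # J)) x y =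
        of_nat (\<Sum>k\<in>{1..\<Lambda>}. card (replacements (k # I) (k # J) K M))"
      using True unfolding sum_fun_apply of_nat_sum by (intro sum.cong) (auto simp: xy opS_apply)
    moreover have "opS \<Lambda> \<Lambda>F I J x y = of_nat (card (replacements I J K M))"
      using True by (auto simp: xy opS_apply)
    ultimately show ?thesis
      unfolding plus_fun_apply
      using card_replacements_expansion_left[of K "{1..\<Lambda>}" I J M] by simp
  next
    case False
    then have "opS \<Lambda> \<Lambda>F (k # I) (k # J) x y = 0" for k
      by (auto simp: xy opS_apply)
    with False show ?thesis
      unfolding xy plus_fun_apply sum_opL_diag_apply by (auto simp: sum_fun_apply opS_apply)
  qed
qed

lemma opS_expansion_right:
  "opS \<Lambda> \<Lambda>F I J =
    (\<Sum>\<mu>\<in>{1..\<Lambda>F}. opR \<Lambda> \<Lambda>F I J \<mu> \<mu>) + (\<Sum>k\<in>{1..\<Lambda>}. opS \<Lambda> \<Lambda>F (I @ [k]) (J @ [k]))"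
proof (intro ext)
  fix x y :: bvec
  obtain a K b c M d where xy: "x = (a, K, b)" "y = (c, M, d)" by (cases x, cases y)
  show "opS \<Lambda> \<Lambda>F I J x y = ((\<Sum>\<mu>\<in>{1..\<Lambda>F}. opR \<Lambda> \<Lambda>F I J \<mu> \<mu>) +
      (\<Sum>k\<in>{1..\<Lambda>}. opS \<Lambda> \<Lambda>F (I @ [k]) (J @ [k]))) x y"
  proof (cases "valid \<Lambda> \<Lambda>F x \<and> c = a \<and> d = b")
    case True
    then have "set K \<subseteq> {1..\<Lambda>}" by (simp add: xy valid_iff seqs_iff)
    moreover have "(\<Sum>\<mu>\<in>{1..\<Lambda>F}. opR \<Lambda> \<Lambda>F I J \<mu> \<mu>) x y = of_bool (replaces_suffix I J K M)"
      using True unfolding xy sum_opR_diag_apply by auto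
    moreover have "(\<Sum>k\<in>{1..\<Lambda>}. opS \<Lambda> \<Lambda>F (I @ [k]) (J @ [k])) x y =
        of_nat (\<Sum>k\<in>{1..\<Lambda>}. card (replacements (I @ [k]) (J @ [k]) K M))"
      using True unfolding sum_fun_apply of_nat_sum by (intro sum.cong) (auto simp: xy opS_apply)
    moreover have "opS \<Lambda> \<Lambda>F I J x y = of_nat (card (replacements I J K M))"
      using True by (auto simp: xy opS_apply)
    ultimately show ?thesis
      unfolding plus_fun_apply
      using card_replacements_expansion_right[of K "{1..\<Lambda>}" I J M] by simp
  next
    case False
    then have "opS \<Lambda> \<Lambda>F (I @ [k]) (J @ [k]) x y = 0" for k
      by (auto simp: xy opS_apply)
    with False show ?thesis
      unfolding xy plus_fun_apply sum_opR_diag_apply by (auto simp: sum_fun_apply opS_apply)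
  qed
qed

datatype op_index =
    F_index nat nat "nat list" "nat list" nat nat
  | L_index nat nat "nat list" "nat list"
  | R_index "nat list" "nat list" nat nat
  | S_index "nat list" "nat list"

fun operator :: "nat \<Rightarrow> nat \<Rightarrow> op_index \<Rightarrow> oper" where
  "operator \<Lambda> \<Lambda>F (F_index l1 l2 I J l3 l4) = opF \<Lambda> \<Lambda>F l1 l2 I J l3 l4"
| "operator \<Lambda> \<Lambda>F (L_index l1 l2 I J) = opL \<Lambda> \<Lambda>F l1 l2 I J"
| "operator \<Lambda> \<Lambda>F (R_index I J l1 l2) = opR \<Lambda> \<Lambda>F I J l1 l2"
| "operator \<Lambda> \<Lambda>F (S_index I J) = opS \<Lambda> \<Lambda>F I J"

fun valid_index :: "nat \<Rightarrow> nat \<Rightarrow> op_index \<Rightarrow> bool" where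
  "valid_index \<Lambda> \<Lambda>F (F_index l1 l2 I J l3 l4) \<longleftrightarrow>
     {l1, l2, l3, l4} \<subseteq> {1..\<Lambda>F} \<and> I \<in> seqs \<Lambda> \<and> J \<in> seqs \<Lambda>"
| "valid_index \<Lambda> \<Lambda>F (L_index l1 l2 I J) \<longleftrightarrow> {l1, l2} \<subseteq> {1..\<Lambda>F} \<and> I \<in> seqs \<Lambda> \<and> J \<in> seqs \<Lambda>"
| "valid_index \<Lambda> \<Lambda>F (R_index I J l1 l2) \<longleftrightarrow> {l1, l2} \<subseteq> {1..\<Lambda>F} \<and> I \<in> seqs \<Lambda> \<and> J \<in> seqs \<Lambda>"
| "valid_index \<Lambda> \<Lambda>F (S_index I J) \<longleftrightarrow> I \<in> seqs \<Lambda> \<and> J \<in> seqs \<Lambda>"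

fun admissible :: "op_index \<Rightarrow> bool" where
  "admissible (F_index _ _ _ _ _ _) \<longleftrightarrow> True"
| "admissible (L_index _ _ I J) \<longleftrightarrow> \<not> last_both_one I J"
| (* items (3)-(6) of B4 in one condition *)
  "admissible (R_index I J l1 l2) \<longleftrightarrow> \<not> first_both_one I J \<and>
     ((I = [] \<or> J = []) \<longrightarrow> \<not> (l1 = 1 \<and> l2 = 1 \<and> (I = [] \<or> hd I = 1) \<and> (J = [] \<or> hd J = 1)))"
| "admissible (S_index I J) \<longleftrightarrow> \<not> first_both_one I J \<and> \<not> last_both_one I J"

lemma all_ops_eq_image: "all_ops \<Lambda> \<Lambda>F = operator \<Lambda> \<Lambda>F ` {i. valid_index \<Lambda> \<Lambda>F i}"
proof (intro equalityI subsetI)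
  fix A assume "A \<in> all_ops \<Lambda> \<Lambda>F"
  then show "A \<in> operator \<Lambda> \<Lambda>F ` {i. valid_index \<Lambda> \<Lambda>F i}"
    unfolding all_ops_def by (auto simp flip: operator.simps intro!: imageI)
next
  fix A assume "A \<in> operator \<Lambda> \<Lambda>F ` {i. valid_index \<Lambda> \<Lambda>F i}"
  then obtain i where "A = operator \<Lambda> \<Lambda>F i" "valid_index \<Lambda> \<Lambda>F i" by blast
  then show "A \<in> all_ops \<Lambda> \<Lambda>F"
    unfolding all_ops_def by (cases i) (simp only: operator.simps valid_index.simps insert_subset; blast)+
qed

lemma operator_in_B4:
  assumes "valid_index \<Lambda> \<Lambda>F i" "admissible i"
  shows "operator \<Lambda> \<Lambda>F i \<in> B4 \<Lambda> \<Lambda>F"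
proof (cases i)
  case (F_index l1 l2 I J l3 l4)
  then have "l1 \<in> {1..\<Lambda>F}" "l2 \<in> {1..\<Lambda>F}" "l3 \<in> {1..\<Lambda>F}" "l4 \<in> {1..\<Lambda>F}"
    "I \<in> seqs \<Lambda>" "J \<in> seqs \<Lambda>"
    using assms by simp_all
  then show ?thesis unfolding F_index operator.simps B4_def by (intro UnI1) blast
next
  case (L_index l1 l2 I J)
  then have "l1 \<in> {1..\<Lambda>F}" "l2 \<in> {1..\<Lambda>F}" "I \<in> seqs \<Lambda>" "J \<in> seqs \<Lambda>" "\<not> last_both_one I J"
    using assms by simp_all
  then show ?thesis unfolding L_index operator.simps B4_def by blast
next
  case (R_index I J l1 l2)
  then have "l1 \<in> {1..\<Lambda>F}" "l2 \<in> {1..\<Lambda>F}" "I \<in> seqs \<Lambda>" "J \<in> seqs \<Lambda>" "\<not> first_both_one I J"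
      "(I = [] \<or> J = []) \<longrightarrow> \<not> (l1 = 1 \<and> l2 = 1 \<and> (I = [] \<or> hd I = 1) \<and> (J = [] \<or> hd J = 1))"
    using assms by simp_all
  then show ?thesis unfolding R_index operator.simps B4_def by (cases "I = []"; cases "J = []") blast+
next
  case (S_index I J)
  then have "I \<in> seqs \<Lambda>" "J \<in> seqs \<Lambda>" "\<not> first_both_one I J" "\<not> last_both_one I J"
    using assms by simp_all
  then show ?thesis unfolding S_index operator.simps B4_def by (cases "I = []"; cases "J = []") blast+
qed

lemma B4_eq_image: "B4 \<Lambda> \<Lambda>F = operator \<Lambda> \<Lambda>F ` {i. valid_index \<Lambda> \<Lambda>F i \<and> admissible i}"
proof (intro equalityI subsetI)
  fix A assume "A \<in> B4 \<Lambda> \<Lambda>F"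
  then show "A \<in> operator \<Lambda> \<Lambda>F ` {i. valid_index \<Lambda> \<Lambda>F i \<and> admissible i}"
    unfolding B4_def
    by (auto simp: first_both_one_def last_both_one_def simp flip: operator.simps intro!: imageI)
qed (auto intro: operator_in_B4)

section \<open>Spanning\<close>

context module
begin

lemma span_isolate_summand:
  assumes "x = y + sum f A" "k \<in> A" "finite A" "x \<in> span S" "y \<in> span S"
    and "\<And>j. j \<in> A - {k} \<Longrightarrow> f j \<in> span S"
  shows "f k \<in> span S"
proof -
  have "f k = x - y - sum f (A - {k})"
    using assms(1-3) by (simp add: sum.remove algebra_simps)
  also have "\<dots> \<in> span S"
    using assms(4-6) by (intro span_diff span_sum) auto
  finally show ?thesis .
qed

end

locale open_string_ranks =
  fixes \<Lambda> \<Lambda>F :: nat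
  assumes \<Lambda>_pos: "1 \<le> \<Lambda>" and \<Lambda>F_pos: "1 \<le> \<Lambda>F"
begin

lemma one_in_ranks: "1 \<in> {1..\<Lambda>}" "1 \<in> {1..\<Lambda>F}"
  using \<Lambda>_pos \<Lambda>F_pos by auto

lemma admissible_in_span:
  "valid_index \<Lambda> \<Lambda>F i \<Longrightarrow> admissible i \<Longrightarrow> operator \<Lambda> \<Lambda>F i \<in> Op.span (B4 \<Lambda> \<Lambda>F)"
  by (intro Op.span_base operator_in_B4)

lemma opL_in_span:
  assumes "l1 \<in> {1..\<Lambda>F}" "l2 \<in> {1..\<Lambda>F}" "I \<in> seqs \<Lambda>" "J \<in> seqs \<Lambda>"
  shows "opL \<Lambda> \<Lambda>F l1 l2 I J \<in> Op.span (B4 \<Lambda> \<Lambda>F)"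
  using assms(3,4)
proof (induction "length J" arbitrary: I J rule: less_induct)
  case less
  show ?case
  proof (cases "last_both_one I J")
    case False
    then show ?thesis using assms(1,2) less.prems admissible_in_span[of "L_index l1 l2 I J"] by simp
  next
    case True
    then obtain I' J' where IJ: "I = I' @ [1]" "J = J' @ [1]"
      unfolding last_both_one_def by (metis append_butlast_last_id)
    show ?thesis unfolding IJ
    proof (rule Op.span_isolate_summand[OF opL_expansion one_in_ranks(1)])
      show "opL \<Lambda> \<Lambda>F l1 l2 I' J' \<in> Op.span (B4 \<Lambda> \<Lambda>F)"
        using less IJ by simp
      show "(\<Sum>\<mu>\<in>{1..\<Lambda>F}. opF \<Lambda> \<Lambda>F l1 l2 I' J' \<mu> \<mu>) \<in> Op.span (B4 \<Lambda> \<Lambda>F)"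
        using assms(1,2) less.prems IJ
        by (intro Op.span_sum) (use admissible_in_span[of "F_index l1 l2 I' J' _ _"] in simp)
      show "opL \<Lambda> \<Lambda>F l1 l2 (I' @ [k]) (J' @ [k]) \<in> Op.span (B4 \<Lambda> \<Lambda>F)" if "k \<in> {1..\<Lambda>} - {1}" for k
        using assms(1,2) less.prems IJ that admissible_in_span[of "L_index l1 l2 (I' @ [k]) (J' @ [k])"]
        by (simp add: last_both_one_def)
    qed simp
  qed
qed

end


context open_string_ranks
begin

lemma opS_wrapped_one_in_span:
  assumes "I \<in> seqs \<Lambda>"
  shows "opS \<Lambda> \<Lambda>F (1 # I @ [1]) [1] \<in> Op.span (B4 \<Lambda> \<Lambda>F)"
proof (rule Op.span_isolate_summand[OF opS_expansion_left one_in_ranks(1)])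
  show "opS \<Lambda> \<Lambda>F (I @ [1]) [] \<in> Op.span (B4 \<Lambda> \<Lambda>F)"
    using assms one_in_ranks admissible_in_span[of "S_index (I @ [1]) []"]
    by (simp add: first_both_one_def last_both_one_def)
  show "(\<Sum>\<mu>\<in>{1..\<Lambda>F}. opL \<Lambda> \<Lambda>F \<mu> \<mu> (I @ [1]) []) \<in> Op.span (B4 \<Lambda> \<Lambda>F)"
    using assms one_in_ranks by (intro Op.span_sum opL_in_span) auto
  show "opS \<Lambda> \<Lambda>F (k # I @ [1]) [k] \<in> Op.span (B4 \<Lambda> \<Lambda>F)" if "k \<in> {1..\<Lambda>} - {1}" for k
    using assms one_in_ranks that admissible_in_span[of "S_index (k # I @ [1]) [k]"]
    by (simp add: first_both_one_def last_both_one_def)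
qed simp

lemma opS_one_wrapped_in_span:
  assumes "J \<in> seqs \<Lambda>"
  shows "opS \<Lambda> \<Lambda>F [1] (1 # J @ [1]) \<in> Op.span (B4 \<Lambda> \<Lambda>F)"
proof (rule Op.span_isolate_summand[OF opS_expansion_left one_in_ranks(1)])
  show "opS \<Lambda> \<Lambda>F [] (J @ [1]) \<in> Op.span (B4 \<Lambda> \<Lambda>F)"
    using assms one_in_ranks admissible_in_span[of "S_index [] (J @ [1])"]
    by (simp add: first_both_one_def last_both_one_def)
  show "(\<Sum>\<mu>\<in>{1..\<Lambda>F}. opL \<Lambda> \<Lambda>F \<mu> \<mu> [] (J @ [1])) \<in> Op.span (B4 \<Lambda> \<Lambda>F)"
    using assms one_in_ranks by (intro Op.span_sum opL_in_span) auto
  show "opS \<Lambda> \<Lambda>F [k] (k # J @ [1]) \<in> Op.span (B4 \<Lambda> \<Lambda>F)" if "k \<in> {1..\<Lambda>} - {1}" for k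
    using assms one_in_ranks that admissible_in_span[of "S_index [k] (k # J @ [1])"]
    by (simp add: first_both_one_def last_both_one_def)
qed simp

lemma opR_in_span:
  assumes "l1 \<in> {1..\<Lambda>F}" "l2 \<in> {1..\<Lambda>F}" "I \<in> seqs \<Lambda>" "J \<in> seqs \<Lambda>"
  shows "opR \<Lambda> \<Lambda>F I J l1 l2 \<in> Op.span (B4 \<Lambda> \<Lambda>F)"
  using assms(3,4)
proof (induction "length I + length J" arbitrary: I J rule: less_induct)
  case less
  consider "admissible (R_index I J l1 l2)" | "first_both_one I J"
    | "I = []" "J = []" "l1 = 1" "l2 = 1"
    | I' where "I = 1 # I'" "J = []" "l1 = 1" "l2 = 1"
    | J' where "I = []" "J = 1 # J'" "l1 = 1" "l2 = 1"
    by (cases I; cases J) auto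
  then show ?case
  proof cases
    case 1
    then show ?thesis using assms(1,2) less.prems admissible_in_span[of "R_index I J l1 l2"] by simp
  next
    case 2
    then obtain I' J' where IJ: "I = 1 # I'" "J = 1 # J'"
      unfolding first_both_one_def by (metis list.collapse)
    show ?thesis unfolding IJ
    proof (rule Op.span_isolate_summand[OF opR_expansion one_in_ranks(1)])
      show "opR \<Lambda> \<Lambda>F I' J' l1 l2 \<in> Op.span (B4 \<Lambda> \<Lambda>F)"
        using less IJ by simp
      show "(\<Sum>\<mu>\<in>{1..\<Lambda>F}. opF \<Lambda> \<Lambda>F \<mu> \<mu> I' J' l1 l2) \<in> Op.span (B4 \<Lambda> \<Lambda>F)"
        using assms(1,2) less.prems IJ
        by (intro Op.span_sum) (use admissible_in_span[of "F_index _ _ I' J' l1 l2"] in simp)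
      show "opR \<Lambda> \<Lambda>F (k # I') (k # J') l1 l2 \<in> Op.span (B4 \<Lambda> \<Lambda>F)" if "k \<in> {1..\<Lambda>} - {1}" for k
        using assms(1,2) less.prems IJ that admissible_in_span[of "R_index (k # I') (k # J') l1 l2"]
        by (simp add: first_both_one_def)
    qed simp
  next
    case 3
    have "(\<Sum>\<mu>\<in>{1..\<Lambda>F}. opL \<Lambda> \<Lambda>F \<mu> \<mu> [] []) = 0 + (\<Sum>\<mu>\<in>{1..\<Lambda>F}. opR \<Lambda> \<Lambda>F [] [] \<mu> \<mu>)"
      using sum_opR_Nil_Nil_eq_sum_opL_Nil_Nil[of \<Lambda> \<Lambda>F] by simp
    then show ?thesis unfolding 3
    proof (rule Op.span_isolate_summand[OF _ one_in_ranks(2)])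
      show "(\<Sum>\<mu>\<in>{1..\<Lambda>F}. opL \<Lambda> \<Lambda>F \<mu> \<mu> [] []) \<in> Op.span (B4 \<Lambda> \<Lambda>F)"
        by (intro Op.span_sum opL_in_span) auto
      show "opR \<Lambda> \<Lambda>F [] [] \<mu> \<mu> \<in> Op.span (B4 \<Lambda> \<Lambda>F)" if "\<mu> \<in> {1..\<Lambda>F} - {1}" for \<mu>
        using that admissible_in_span[of "R_index [] [] \<mu> \<mu>"]
        by (simp add: first_both_one_def)
    qed (simp_all add: Op.span_zero)
  next
    case (4 I')
    have "opS \<Lambda> \<Lambda>F I [] = (\<Sum>k\<in>{1..\<Lambda>}. opS \<Lambda> \<Lambda>F (I @ [k]) [k]) + (\<Sum>\<mu>\<in>{1..\<Lambda>F}. opR \<Lambda> \<Lambda>F I [] \<mu> \<mu>)"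
      using opS_expansion_right[of \<Lambda> \<Lambda>F I "[]"] by (simp add: add.commute)
    then show ?thesis unfolding \<open>J = []\<close> \<open>l1 = 1\<close> \<open>l2 = 1\<close>
    proof (rule Op.span_isolate_summand[OF _ one_in_ranks(2)])
      show "opS \<Lambda> \<Lambda>F I [] \<in> Op.span (B4 \<Lambda> \<Lambda>F)"
        using less.prems admissible_in_span[of "S_index I []"]
        by (simp add: first_both_one_def last_both_one_def)
      have "opS \<Lambda> \<Lambda>F (I @ [k]) [k] \<in> Op.span (B4 \<Lambda> \<Lambda>F)" if "k \<in> {1..\<Lambda>}" for k
      proof (cases "k = 1")
        case True
        then show ?thesis using less.prems 4 opS_wrapped_one_in_span[of I'] by simp
      next
        case False
        then show ?thesis using less.prems that 4 admissible_in_span[of "S_index (I @ [k]) [k]"]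
          by (simp add: first_both_one_def last_both_one_def)
      qed
      then show "(\<Sum>k\<in>{1..\<Lambda>}. opS \<Lambda> \<Lambda>F (I @ [k]) [k]) \<in> Op.span (B4 \<Lambda> \<Lambda>F)"
        by (intro Op.span_sum)
      show "opR \<Lambda> \<Lambda>F I [] \<mu> \<mu> \<in> Op.span (B4 \<Lambda> \<Lambda>F)" if "\<mu> \<in> {1..\<Lambda>F} - {1}" for \<mu>
        using less.prems that admissible_in_span[of "R_index I [] \<mu> \<mu>"]
        by (simp add: first_both_one_def)
    qed simp
  next
    case (5 J')
    have "opS \<Lambda> \<Lambda>F [] J = (\<Sum>k\<in>{1..\<Lambda>}. opS \<Lambda> \<Lambda>F [k] (J @ [k])) + (\<Sum>\<mu>\<in>{1..\<Lambda>F}. opR \<Lambda> \<Lambda>F [] J \<mu> \<mu>)"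
      using opS_expansion_right[of \<Lambda> \<Lambda>F "[]" J] by (simp add: add.commute)
    then show ?thesis unfolding \<open>I = []\<close> \<open>l1 = 1\<close> \<open>l2 = 1\<close>
    proof (rule Op.span_isolate_summand[OF _ one_in_ranks(2)])
      show "opS \<Lambda> \<Lambda>F [] J \<in> Op.span (B4 \<Lambda> \<Lambda>F)"
        using less.prems admissible_in_span[of "S_index [] J"]
        by (simp add: first_both_one_def last_both_one_def)
      have "opS \<Lambda> \<Lambda>F [k] (J @ [k]) \<in> Op.span (B4 \<Lambda> \<Lambda>F)" if "k \<in> {1..\<Lambda>}" for k
      proof (cases "k = 1")
        case True
        then show ?thesis using less.prems 5 opS_one_wrapped_in_span[of J'] by simp
      next
        case False
        then show ?thesis using less.prems that 5 admissible_in_span[of "S_index [k] (J @ [k])"]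
          by (simp add: first_both_one_def last_both_one_def)
      qed
      then show "(\<Sum>k\<in>{1..\<Lambda>}. opS \<Lambda> \<Lambda>F [k] (J @ [k])) \<in> Op.span (B4 \<Lambda> \<Lambda>F)"
        by (intro Op.span_sum)
      show "opR \<Lambda> \<Lambda>F [] J \<mu> \<mu> \<in> Op.span (B4 \<Lambda> \<Lambda>F)" if "\<mu> \<in> {1..\<Lambda>F} - {1}" for \<mu>
        using less.prems that admissible_in_span[of "R_index [] J \<mu> \<mu>"]
        by (simp add: first_both_one_def)
    qed simp
  qed
qed

lemma opS_in_span:
  assumes "I \<in> seqs \<Lambda>" "J \<in> seqs \<Lambda>"
  shows "opS \<Lambda> \<Lambda>F I J \<in> Op.span (B4 \<Lambda> \<Lambda>F)"
  using assms
proof (induction "length I + length J" arbitrary: I J rule: less_induct)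
  case less
  have not_first: "opS \<Lambda> \<Lambda>F I0 J0 \<in> Op.span (B4 \<Lambda> \<Lambda>F)"
    if "length I0 + length J0 = length I + length J" "\<not> first_both_one I0 J0" "I0 \<in> seqs \<Lambda>" "J0 \<in> seqs \<Lambda>"
    for I0 J0
  proof (cases "last_both_one I0 J0")
    case False
    then show ?thesis using that admissible_in_span[of "S_index I0 J0"] by simp
  next
    case True
    then obtain I' J' where IJ: "I0 = I' @ [1]" "J0 = J' @ [1]"
      unfolding last_both_one_def by (metis append_butlast_last_id)
    show ?thesis unfolding IJ
    proof (rule Op.span_isolate_summand[OF opS_expansion_right one_in_ranks(1)])
      show "opS \<Lambda> \<Lambda>F I' J' \<in> Op.span (B4 \<Lambda> \<Lambda>F)"
        using less.hyps that IJ by simp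
      show "(\<Sum>\<mu>\<in>{1..\<Lambda>F}. opR \<Lambda> \<Lambda>F I' J' \<mu> \<mu>) \<in> Op.span (B4 \<Lambda> \<Lambda>F)"
        using that IJ by (intro Op.span_sum opR_in_span) auto
      show "opS \<Lambda> \<Lambda>F (I' @ [k]) (J' @ [k]) \<in> Op.span (B4 \<Lambda> \<Lambda>F)" if "k \<in> {1..\<Lambda>} - {1}" for k
      proof -
        have "\<not> first_both_one (I' @ [k]) (J' @ [k])"
          using \<open>\<not> first_both_one I0 J0\<close> that IJ by (cases I'; cases J') (auto simp: first_both_one_def)
        then show ?thesis
          using \<open>I0 \<in> seqs \<Lambda>\<close> \<open>J0 \<in> seqs \<Lambda>\<close> that IJ admissible_in_span[of "S_index (I' @ [k]) (J' @ [k])"]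
          by (simp add: last_both_one_def)
      qed
    qed simp
  qed
  show ?case
  proof (cases "first_both_one I J")
    case True
    then obtain I' J' where IJ: "I = 1 # I'" "J = 1 # J'"
      unfolding first_both_one_def by (metis list.collapse)
    show ?thesis unfolding IJ
    proof (rule Op.span_isolate_summand[OF opS_expansion_left one_in_ranks(1)])
      show "opS \<Lambda> \<Lambda>F I' J' \<in> Op.span (B4 \<Lambda> \<Lambda>F)"
        using less IJ by simp
      show "(\<Sum>\<mu>\<in>{1..\<Lambda>F}. opL \<Lambda> \<Lambda>F \<mu> \<mu> I' J') \<in> Op.span (B4 \<Lambda> \<Lambda>F)"
        using less.prems IJ by (intro Op.span_sum opL_in_span) auto
      show "opS \<Lambda> \<Lambda>F (k # I') (k # J') \<in> Op.span (B4 \<Lambda> \<Lambda>F)" if "k \<in> {1..\<Lambda>} - {1}" for k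
        using less.prems IJ that by (intro not_first) (auto simp: first_both_one_def)
    qed simp
  qed (use less.prems not_first in blast)
qed

lemma all_ops_subset_span_B4: "all_ops \<Lambda> \<Lambda>F \<subseteq> Op.span (B4 \<Lambda> \<Lambda>F)"
proof
  fix A assume "A \<in> all_ops \<Lambda> \<Lambda>F"
  then obtain i where A: "A = operator \<Lambda> \<Lambda>F i" and i: "valid_index \<Lambda> \<Lambda>F i"
    unfolding all_ops_eq_image by blast
  show "A \<in> Op.span (B4 \<Lambda> \<Lambda>F)"
    using i unfolding A
    by (cases i) (use admissible_in_span[of i] in \<open>simp_all add: opL_in_span opR_in_span opS_in_span\<close>)
qed

lemma span_B4: "Op.span (B4 \<Lambda> \<Lambda>F) = Ghat \<Lambda> \<Lambda>F"
proof -
  have "B4 \<Lambda> \<Lambda>F \<subseteq> all_ops \<Lambda> \<Lambda>F"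
    unfolding B4_eq_image all_ops_eq_image by blast
  then show ?thesis
    unfolding Ghat_def Op.span_eq using all_ops_subset_span_B4 Op.span_superset by blast
qed

end

section \<open>Linear independence\<close>

definition left_diff :: "(nat list \<Rightarrow> nat list \<Rightarrow> 'a::ab_group_add) \<Rightarrow> nat list \<Rightarrow> nat list \<Rightarrow> 'a" where
  "left_diff f K M = f K M - (if K \<noteq> [] \<and> M \<noteq> [] \<and> hd K = hd M then f (tl K) (tl M) else 0)"

definition right_diff :: "(nat list \<Rightarrow> nat list \<Rightarrow> 'a::ab_group_add) \<Rightarrow> nat list \<Rightarrow> nat list \<Rightarrow> 'a" where
  "right_diff f K M = f K M - (if K \<noteq> [] \<and> M \<noteq> [] \<and> last K = last M then f (butlast K) (butlast M) else 0)"

lemma left_diff_cong_seqs: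
  "(\<And>K M. K \<in> seqs \<Lambda> \<Longrightarrow> f K M = g K M) \<Longrightarrow> K \<in> seqs \<Lambda> \<Longrightarrow> left_diff f K M = left_diff g K M"
  by (simp add: left_diff_def seqs_tl)

lemma right_diff_cong_seqs:
  "(\<And>K M. K \<in> seqs \<Lambda> \<Longrightarrow> f K M = g K M) \<Longrightarrow> K \<in> seqs \<Lambda> \<Longrightarrow> right_diff f K M = right_diff g K M"
  by (simp add: right_diff_def seqs_butlast)

lemma replaces_prefix_iff_butlast:
  "replaces_prefix I J K M \<longleftrightarrow> (K = J \<and> M = I) \<or>
     (K \<noteq> [] \<and> M \<noteq> [] \<and> last K = last M \<and> replaces_prefix I J (butlast K) (butlast M))"
proof (cases "K \<noteq> [] \<and> M \<noteq> [] \<and> last K = last M")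
  case True
  then obtain K' M' k where "K = K' @ [k]" "M = M' @ [k]"
    by (metis append_butlast_last_id)
  then show ?thesis by (auto simp: replaces_prefix_snoc_snoc)
next
  case False
  then show ?thesis unfolding replaces_prefix_def
    by (auto simp: last_append)
qed

lemma replaces_suffix_iff_tl:
  "replaces_suffix I J K M \<longleftrightarrow> (K = J \<and> M = I) \<or>
     (K \<noteq> [] \<and> M \<noteq> [] \<and> hd K = hd M \<and> replaces_suffix I J (tl K) (tl M))"
proof (cases "K \<noteq> [] \<and> M \<noteq> [] \<and> hd K = hd M")
  case True
  then obtain K' M' k where "K = k # K'" "M = k # M'"
    by (metis list.collapse)
  then show ?thesis by (auto simp: replaces_suffix_Cons_Cons)
next
  case False
  then show ?thesis unfolding replaces_suffix_def
    by (auto simp: hd_append)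
qed

lemma right_diff_replaces_prefix:
  "right_diff (\<lambda>K M. of_bool (replaces_prefix I J K M)) K M = (of_bool (K = J \<and> M = I) :: 'a::ring_1)"
proof -
  have "\<not> (K = J \<and> replaces_prefix I J (butlast K) (butlast M))" if "K \<noteq> []"
    using that replaces_prefix_length[of I J "butlast K" "butlast M"] by (cases K rule: rev_cases) auto
  then show ?thesis
    using replaces_prefix_iff_butlast[of I J K M] by (auto simp: right_diff_def)
qed

lemma left_diff_replaces_suffix:
  assumes "\<And>x y. length (J x) = length (J y)"
  shows "left_diff (\<lambda>K M. of_bool (\<exists>x. replaces_suffix (I x) (J x) K M)) K M =
    (of_bool (\<exists>x. K = J x \<and> M = I x) :: 'a::ring_1)"
proof -
  have "\<not> (K = J x \<and> replaces_suffix (I y) (J y) (tl K) (tl M))" if "K \<noteq> []" for x y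
  proof
    assume "K = J x \<and> replaces_suffix (I y) (J y) (tl K) (tl M)"
    then have "length (J y) \<le> length (J x) - 1"
      using replaces_suffix_length[of "I y" "J y" "tl K" "tl M"] by auto
    moreover have "0 < length (J x)" using that \<open>K = J x \<and> _\<close> by simp
    ultimately show False using assms[of x y] by linarith
  qed
  then show ?thesis
    using replaces_suffix_iff_tl[of "I _" "J _" K M] by (auto simp: left_diff_def)
qed

lemma left_diff_replaces_suffix_single:
  "left_diff (\<lambda>K M. of_bool (replaces_suffix I J K M)) K M = (of_bool (K = J \<and> M = I) :: 'a::ring_1)"
  using left_diff_replaces_suffix[of "\<lambda>_ :: unit. J" "\<lambda>_. I" K M] by simp

lemma left_diff_diff:
  "left_diff (\<lambda>K M. f K M - g K M) K M = left_diff f K M - left_diff g K M"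
  by (simp add: left_diff_def)

lemma left_diff_zero [simp]: "left_diff (\<lambda>K M. 0) K M = 0"
  by (simp add: left_diff_def)

lemma right_diff_card_replacements:
  "right_diff (\<lambda>K M. of_nat (card (replacements I J K M))) K M = (of_bool (replaces_suffix I J K M) :: 'a::ring_1)"
  by (simp add: right_diff_def card_replacements_butlast[of I J K M])

lemma replaces_suffix_snoc_pattern:
  "replaces_suffix (I @ [k]) (J @ [k]) K M \<longleftrightarrow>
     K \<noteq> [] \<and> M \<noteq> [] \<and> last K = k \<and> last M = k \<and> replaces_suffix I J (butlast K) (butlast M)"
  unfolding replaces_suffix_def by (auto simp: butlast_append) (metis append_butlast_last_id append_assoc)+

lemma right_diff_replaces_suffix:
  "right_diff (\<lambda>K M. of_bool (replaces_suffix I J K M)) K M =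
    (of_bool (replaces_suffix I J K M) - of_bool (\<exists>k. replaces_suffix (I @ [k]) (J @ [k]) K M) :: 'a::ring_1)"
  by (auto simp: right_diff_def replaces_suffix_snoc_pattern)

lemma replaces_suffix_replicate_one:
  "\<not> first_both_one I J \<Longrightarrow>
    replaces_suffix I J (replicate n 1 @ K) (replicate n 1 @ M) \<longleftrightarrow> replaces_suffix I J K M"
  by (induction n) (auto simp: replaces_suffix_Cons_Cons first_both_one_def)

lemma replaces_prefix_replicate_one:
  "\<not> last_both_one I J \<Longrightarrow>
    replaces_prefix I J (K @ replicate n 1) (M @ replicate n 1) \<longleftrightarrow> replaces_prefix I J K M"
proof (induction n arbitrary: K M)
  case (Suc n)
  then show ?case
    using Suc.IH[of "K @ [1]" "M @ [1]"] by (auto simp: replaces_prefix_snoc_snoc last_both_one_def)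
qed simp

abbreviation ones :: "nat \<Rightarrow> nat list" where
  "ones n \<equiv> replicate n 1"

definition test_S :: "nat \<Rightarrow> oper \<Rightarrow> nat list \<Rightarrow> nat list \<Rightarrow> complex" where
  "test_S n A = left_diff (\<lambda>K M. right_diff (\<lambda>K M. A (1, K, 1) (1, M, 1)) (ones n @ K) (ones n @ M))"

text \<open>At \<open>(J, I)\<close>, \<open>test_S\<close> detects \<open>r\<^sup>I\<^sub>J \<otimes> \<Xi>\<^sup>1\<^sub>1\<close> but also, with the opposite sign,
  \<open>r\<^sup>I\<^sup>'\<^sub>J\<^sub>' \<otimes> \<Xi>\<^sup>1\<^sub>1\<close> for \<open>I = I' k\<close>, \<open>J = J' k\<close>; summing along \<open>(J 1\<^sup>j, I 1\<^sup>j)\<close> telescopes.\<close>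

definition test_R11 :: "nat \<Rightarrow> nat \<Rightarrow> oper \<Rightarrow> nat list \<Rightarrow> nat list \<Rightarrow> complex" where
  "test_R11 n m A K M = (\<Sum>j<m. test_S n A (K @ ones (Suc j)) (M @ ones (Suc j)))"

definition test_L :: "nat \<Rightarrow> nat \<Rightarrow> nat \<Rightarrow> oper \<Rightarrow> nat list \<Rightarrow> nat list \<Rightarrow> complex" where
  "test_L n a c A = right_diff (\<lambda>K M. A (a, K @ ones n, 1) (c, M @ ones n, 1))"

definition test_R :: "nat \<Rightarrow> nat \<Rightarrow> nat \<Rightarrow> oper \<Rightarrow> nat list \<Rightarrow> nat list \<Rightarrow> complex" where
  "test_R n b d A = left_diff (\<lambda>K M. A (1, ones n @ K, b) (1, ones n @ M, d))"

context open_string_ranks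
begin

lemma ones_in_seqs: "ones n \<in> seqs \<Lambda>"
  using \<Lambda>_pos by (rule replicate_one_in_seqs)

lemma test_S_opS:
  assumes "admissible (S_index I J)" "K \<in> seqs \<Lambda>"
  shows "test_S n (opS \<Lambda> \<Lambda>F I J) K M = of_bool (K = J \<and> M = I)"
proof -
  have "test_S n (opS \<Lambda> \<Lambda>F I J) K M = left_diff (\<lambda>K M. of_bool (replaces_suffix I J K M)) K M"
    unfolding test_S_def
  proof (rule left_diff_cong_seqs[OF _ assms(2)])
    fix K M :: "nat list" assume "K \<in> seqs \<Lambda>"
    then have "right_diff (\<lambda>K M. opS \<Lambda> \<Lambda>F I J (1, K, 1) (1, M, 1)) (ones n @ K) (ones n @ M) =
        right_diff (\<lambda>K M. of_nat (card (replacements I J K M))) (ones n @ K) (ones n @ M)"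
      using \<Lambda>F_pos ones_in_seqs by (intro right_diff_cong_seqs[where \<Lambda> = \<Lambda>]) (simp_all add: opS_apply valid_iff)
    also have "\<dots> = of_bool (replaces_suffix I J K M)"
      using assms(1) replaces_suffix_replicate_one[of I J n K M] by (simp add: right_diff_card_replacements)
    finally show "right_diff (\<lambda>K M. opS \<Lambda> \<Lambda>F I J (1, K, 1) (1, M, 1)) (ones n @ K) (ones n @ M) =
        of_bool (replaces_suffix I J K M)" .
  qed
  also have "\<dots> = of_bool (K = J \<and> M = I)"
    by (rule left_diff_replaces_suffix_single)
  finally show ?thesis .
qed

lemma test_S_opR:
  assumes "admissible (R_index I J 1 1)" "K \<in> seqs \<Lambda>"
  shows "test_S n (opR \<Lambda> \<Lambda>F I J 1 1) K M = of_bool (K = J \<and> M = I) - of_bool (\<exists>k. K = J @ [k] \<and> M = I @ [k])"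
proof -
  have not_first: "\<not> first_both_one I J" "\<not> first_both_one (I @ [k]) (J @ [k])" for k
    using assms(1) by (cases I; cases J; auto simp: first_both_one_def)+
  have "test_S n (opR \<Lambda> \<Lambda>F I J 1 1) K M = left_diff (\<lambda>K M. of_bool (replaces_suffix I J K M) -
      of_bool (\<exists>k. replaces_suffix (I @ [k]) (J @ [k]) K M)) K M"
    unfolding test_S_def
  proof (rule left_diff_cong_seqs[OF _ assms(2)])
    fix K M :: "nat list" assume "K \<in> seqs \<Lambda>"
    then have "right_diff (\<lambda>K M. opR \<Lambda> \<Lambda>F I J 1 1 (1, K, 1) (1, M, 1)) (ones n @ K) (ones n @ M) =
        right_diff (\<lambda>K M. of_bool (replaces_suffix I J K M)) (ones n @ K) (ones n @ M)"
      using \<Lambda>F_pos ones_in_seqs by (intro right_diff_cong_seqs[where \<Lambda> = \<Lambda>]) (simp_all add: opR_apply valid_iff)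
    also have "\<dots> = of_bool (replaces_suffix I J K M) - of_bool (\<exists>k. replaces_suffix (I @ [k]) (J @ [k]) K M)"
      using not_first replaces_suffix_replicate_one[of I J n K M]
        replaces_suffix_replicate_one[of "I @ [_]" "J @ [_]" n K M]
      by (simp add: right_diff_replaces_suffix)
    finally show "right_diff (\<lambda>K M. opR \<Lambda> \<Lambda>F I J 1 1 (1, K, 1) (1, M, 1)) (ones n @ K) (ones n @ M) =
        of_bool (replaces_suffix I J K M) - of_bool (\<exists>k. replaces_suffix (I @ [k]) (J @ [k]) K M)" .
  qed
  also have "\<dots> = of_bool (K = J \<and> M = I) - of_bool (\<exists>k. K = J @ [k] \<and> M = I @ [k])"
    unfolding left_diff_diff left_diff_replaces_suffix_single
    by (subst left_diff_replaces_suffix) simp_all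
  finally show ?thesis .
qed

lemma test_S_opR_flavours:
  assumes "\<not> (l1 = 1 \<and> l2 = 1)"
  shows "test_S n (opR \<Lambda> \<Lambda>F I J l1 l2) K M = 0"
proof -
  have "opR \<Lambda> \<Lambda>F I J l1 l2 (1, K, 1) (1, M, 1) = 0" for K M
    using assms by (auto simp: opR_apply)
  then show ?thesis by (simp add: test_S_def left_diff_def right_diff_def)
qed

lemma test_S_opL:
  assumes "length J < n" "K \<in> seqs \<Lambda>"
  shows "test_S n (opL \<Lambda> \<Lambda>F l1 l2 I J) K M = 0"
proof -
  have "right_diff (\<lambda>K M. opL \<Lambda> \<Lambda>F l1 l2 I J (1, K, 1) (1, M, 1)) (ones n @ K') (ones n @ M') = 0"
    if "K' \<in> seqs \<Lambda>" for K' M'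
  proof -
    have "right_diff (\<lambda>K M. opL \<Lambda> \<Lambda>F l1 l2 I J (1, K, 1) (1, M, 1)) (ones n @ K') (ones n @ M') =
        right_diff (\<lambda>K M. of_bool (l1 = 1 \<and> l2 = 1 \<and> replaces_prefix I J K M)) (ones n @ K') (ones n @ M')"
      using that \<Lambda>F_pos ones_in_seqs
      by (intro right_diff_cong_seqs[where \<Lambda> = \<Lambda>]) (auto simp: opL_apply valid_iff)
    also have "\<dots> = 0"
    proof (cases "l1 = 1 \<and> l2 = 1")
      case True
      have "ones n @ K' \<noteq> J" using assms(1) by (metis length_append length_replicate not_add_less1)
      then show ?thesis using True right_diff_replaces_prefix[of I J "ones n @ K'" "ones n @ M'"] by simp
    qed (auto simp: right_diff_def)
    finally show ?thesis .
  qed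
  then have "test_S n (opL \<Lambda> \<Lambda>F l1 l2 I J) K M = left_diff (\<lambda>K M. 0) K M"
    unfolding test_S_def by (rule left_diff_cong_seqs[OF _ assms(2)])
  then show ?thesis by simp
qed

lemma test_S_opF: "length J + 1 < n \<Longrightarrow> test_S n (opF \<Lambda> \<Lambda>F l1 l2 I J l3 l4) K M = 0"
  by (simp add: test_S_def left_diff_def right_diff_def opF_apply_long)

lemma test_R11_opR:
  assumes "admissible (R_index I J 1 1)" "K \<in> seqs \<Lambda>"
  shows "test_R11 n m (opR \<Lambda> \<Lambda>F I J 1 1) K M =
    of_bool (K @ ones m = J \<and> M @ ones m = I) - of_bool (K = J \<and> M = I)"
proof -
  let ?f = "\<lambda>j. of_bool (K @ ones j = J \<and> M @ ones j = I) :: complex"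
  have "test_S n (opR \<Lambda> \<Lambda>F I J 1 1) (K @ ones (Suc j)) (M @ ones (Suc j)) = ?f (Suc j) - ?f j" for j
  proof -
    have "K @ ones (Suc j) = (K @ ones j) @ [1]" "M @ ones (Suc j) = (M @ ones j) @ [1]"
      by (simp_all add: replicate_append_same)
    then have "(\<exists>k. K @ ones (Suc j) = J @ [k] \<and> M @ ones (Suc j) = I @ [k]) \<longleftrightarrow>
        K @ ones j = J \<and> M @ ones j = I"
      by auto
    moreover have "K @ ones (Suc j) \<in> seqs \<Lambda>"
      using assms(2) ones_in_seqs \<Lambda>_pos by simp
    ultimately show ?thesis
      using test_S_opR[OF assms(1)] by simp
  qed
  then have "test_R11 n m (opR \<Lambda> \<Lambda>F I J 1 1) K M = (\<Sum>j<m. ?f (Suc j) - ?f j)"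
    unfolding test_R11_def by (simp only:)
  also have "\<dots> = ?f m - ?f 0"
    by (rule sum_lessThan_telescope)
  finally show ?thesis by simp
qed

lemma test_R11_opS:
  assumes "admissible (S_index I J)" "K \<in> seqs \<Lambda>"
  shows "test_R11 n m (opS \<Lambda> \<Lambda>F I J) K M = 0"
proof -
  have "test_S n (opS \<Lambda> \<Lambda>F I J) (K @ ones (Suc j)) (M @ ones (Suc j)) = 0" for j
  proof -
    have "K @ ones (Suc j) = (K @ ones j) @ [1]" "M @ ones (Suc j) = (M @ ones j) @ [1]"
      by (simp_all add: replicate_append_same)
    then have "\<not> (K @ ones (Suc j) = J \<and> M @ ones (Suc j) = I)"
      using assms(1) by (auto simp: last_both_one_def)
    moreover have "K @ ones (Suc j) \<in> seqs \<Lambda>"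
      using assms(2) ones_in_seqs \<Lambda>_pos by simp
    ultimately show ?thesis
      using test_S_opS[OF assms(1)] by simp
  qed
  then show ?thesis
    unfolding test_R11_def by simp
qed

lemma test_L_opL:
  assumes "\<not> last_both_one I J" "a \<in> {1..\<Lambda>F}" "K \<in> seqs \<Lambda>"
  shows "test_L n a c (opL \<Lambda> \<Lambda>F l1 l2 I J) K M = of_bool (l1 = c \<and> l2 = a \<and> K = J \<and> M = I)"
proof -
  have "test_L n a c (opL \<Lambda> \<Lambda>F l1 l2 I J) K M =
      right_diff (\<lambda>K M. of_bool (l1 = c \<and> l2 = a \<and> replaces_prefix I J K M)) K M"
    unfolding test_L_def
    using assms \<Lambda>F_pos ones_in_seqs replaces_prefix_replicate_one[OF assms(1), of _ n]
    by (intro right_diff_cong_seqs[where \<Lambda> = \<Lambda>]) (auto simp: opL_apply valid_iff)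
  also have "\<dots> = of_bool (l1 = c \<and> l2 = a \<and> K = J \<and> M = I)"
    by (cases "l1 = c \<and> l2 = a") (auto simp: right_diff_replaces_prefix right_diff_def)
  finally show ?thesis .
qed

lemma test_L_opR_flavours:
  assumes "\<not> (l1 = 1 \<and> l2 = 1)"
  shows "test_L n a c (opR \<Lambda> \<Lambda>F I J l1 l2) K M = 0"
proof -
  have "opR \<Lambda> \<Lambda>F I J l1 l2 (a, K, 1) (c, M, 1) = 0" for K M
    using assms by (auto simp: opR_apply)
  then show ?thesis by (simp add: test_L_def right_diff_def)
qed

lemma test_L_opF: "length J < n \<Longrightarrow> test_L n a c (opF \<Lambda> \<Lambda>F l1 l2 I J l3 l4) K M = 0"
  by (simp add: test_L_def right_diff_def opF_apply_long)

lemma test_R_opR: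
  assumes "admissible (R_index I J l1 l2)" "b \<in> {1..\<Lambda>F}" "K \<in> seqs \<Lambda>"
  shows "test_R n b d (opR \<Lambda> \<Lambda>F I J l1 l2) K M = of_bool (l1 = d \<and> l2 = b \<and> K = J \<and> M = I)"
proof -
  have "\<not> first_both_one I J" using assms(1) by simp
  then have "test_R n b d (opR \<Lambda> \<Lambda>F I J l1 l2) K M =
      left_diff (\<lambda>K M. of_bool (l1 = d \<and> l2 = b \<and> replaces_suffix I J K M)) K M"
    unfolding test_R_def
    using assms \<Lambda>F_pos ones_in_seqs replaces_suffix_replicate_one[of I J n]
    by (intro left_diff_cong_seqs[where \<Lambda> = \<Lambda>]) (auto simp: opR_apply valid_iff)
  also have "\<dots> = of_bool (l1 = d \<and> l2 = b \<and> K = J \<and> M = I)"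
    by (cases "l1 = d \<and> l2 = b") (auto simp: left_diff_replaces_suffix_single left_diff_def)
  finally show ?thesis .
qed

lemma test_R_opF: "length J < n \<Longrightarrow> test_R n b d (opF \<Lambda> \<Lambda>F l1 l2 I J l3 l4) K M = 0"
  by (simp add: test_R_def left_diff_def opF_apply_long)

end

fun input_word :: "op_index \<Rightarrow> nat list" where
  "input_word (F_index _ _ _ J _ _) = J"
| "input_word (L_index _ _ _ J) = J"
| "input_word (R_index _ J _ _) = J"
| "input_word (S_index _ J) = J"

locale B4_relation = open_string_ranks +
  fixes C :: "op_index set" and c :: "op_index \<Rightarrow> complex" and N :: nat
  assumes finite_C: "finite C"
    and C_basis: "\<And>i. i \<in> C \<Longrightarrow> valid_index \<Lambda> \<Lambda>F i \<and> admissible i"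
    and C_short: "\<And>i. i \<in> C \<Longrightarrow> length (input_word i) < N"
    and relation: "\<And>x y. (\<Sum>i\<in>C. c i * operator \<Lambda> \<Lambda>F i x y) = 0"
begin

definition vanishes :: "(oper \<Rightarrow> complex) \<Rightarrow> bool" where
  "vanishes \<Phi> \<longleftrightarrow> (\<Sum>i\<in>C. c i * \<Phi> (operator \<Lambda> \<Lambda>F i)) = 0"

lemma vanishes_entry: "vanishes (\<lambda>A. A x y)"
  by (simp add: vanishes_def relation)

lemma vanishes_diff: "vanishes \<Phi> \<Longrightarrow> vanishes \<Psi> \<Longrightarrow> vanishes (\<lambda>A. \<Phi> A - \<Psi> A)"
  by (simp add: vanishes_def right_diff_distrib sum_subtractf)

lemma vanishes_if: "vanishes \<Phi> \<Longrightarrow> vanishes (\<lambda>A. if P then \<Phi> A else 0)"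
  by (cases P) (simp_all add: vanishes_def)

lemma vanishes_sum: "(\<And>j. j \<in> S \<Longrightarrow> vanishes (\<Phi> j)) \<Longrightarrow> vanishes (\<lambda>A. \<Sum>j\<in>S. \<Phi> j A)"
  unfolding vanishes_def by (simp add: sum_distrib_left) (subst sum.swap, simp)

lemma vanishes_left_diff: "(\<And>K M. vanishes (\<lambda>A. F A K M)) \<Longrightarrow> vanishes (\<lambda>A. left_diff (F A) K M)"
  unfolding left_diff_def by (intro vanishes_diff vanishes_if)

lemma vanishes_right_diff: "(\<And>K M. vanishes (\<lambda>A. F A K M)) \<Longrightarrow> vanishes (\<lambda>A. right_diff (F A) K M)"
  unfolding right_diff_def by (intro vanishes_diff vanishes_if)

lemma vanishes_test_S: "vanishes (\<lambda>A. test_S n A K M)"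
  unfolding test_S_def by (intro vanishes_left_diff vanishes_right_diff vanishes_entry)

lemma vanishes_test_R11: "vanishes (\<lambda>A. test_R11 n m A K M)"
  unfolding test_R11_def by (intro vanishes_sum vanishes_test_S)

lemma vanishes_test_L: "vanishes (\<lambda>A. test_L n a b A K M)"
  unfolding test_L_def by (intro vanishes_right_diff vanishes_entry)

lemma vanishes_test_R: "vanishes (\<lambda>A. test_R n a b A K M)"
  unfolding test_R_def by (intro vanishes_left_diff vanishes_entry)

lemma coefficient_zero:
  assumes "vanishes \<Phi>" "g \<in> C" "\<Phi> (operator \<Lambda> \<Lambda>F g) \<noteq> 0"
    and "\<And>i. i \<in> C \<Longrightarrow> i \<noteq> g \<Longrightarrow> c i * \<Phi> (operator \<Lambda> \<Lambda>F i) = 0"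
  shows "c g = 0"
proof -
  have "(\<Sum>i\<in>C - {g}. c i * \<Phi> (operator \<Lambda> \<Lambda>F i)) = 0"
    using assms(4) by (intro sum.neutral) blast
  then have "(\<Sum>i\<in>C. c i * \<Phi> (operator \<Lambda> \<Lambda>F i)) = c g * \<Phi> (operator \<Lambda> \<Lambda>F g)"
    using finite_C assms(2) by (simp add: sum.remove)
  then show ?thesis using assms(1,3) by (simp add: vanishes_def)
qed

lemma coefficient_R11_zero:
  assumes g: "R_index I J 1 1 \<in> C"
  shows "c (R_index I J 1 1) = 0"
proof (rule coefficient_zero[OF vanishes_test_R11[of "Suc N" N J I] g])
  have J: "J \<in> seqs \<Lambda>" and adm: "admissible (R_index I J 1 1)"
    using C_basis[OF g] by simp_all
  have "0 < N" using C_short[OF g] by simp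
  then show "test_R11 (Suc N) N (operator \<Lambda> \<Lambda>F (R_index I J 1 1)) J I \<noteq> 0"
    using test_R11_opR[OF adm J] by simp
  fix i assume i: "i \<in> C" "i \<noteq> R_index I J 1 1"
  have padded: "J @ ones (Suc j) \<in> seqs \<Lambda>" for j
    using J ones_in_seqs \<Lambda>_pos by simp
  show "c i * test_R11 (Suc N) N (operator \<Lambda> \<Lambda>F i) J I = 0"
  proof (cases i)
    case (F_index l1 l2 I0 J0 l3 l4)
    then show ?thesis using C_short[OF i(1)] by (simp add: test_R11_def test_S_opF)
  next
    case (L_index l1 l2 I0 J0)
    then show ?thesis using C_short[OF i(1)] padded by (simp add: test_R11_def test_S_opL)
  next
    case (R_index I0 J0 l1 l2)
    show ?thesis
    proof (cases "l1 = 1 \<and> l2 = 1")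
      case True
      have "length J0 < length (J @ ones N)" using C_short[OF i(1)] R_index by simp
      then show ?thesis
        using True R_index i C_basis[OF i(1)] test_R11_opR[OF _ J, of I0 J0] by auto
    next
      case False
      then show ?thesis using R_index by (simp add: test_R11_def test_S_opR_flavours)
    qed
  next
    case (S_index I0 J0)
    then show ?thesis using C_basis[OF i(1)] by (simp add: test_R11_opS J)
  qed
qed

lemma coefficient_S_zero:
  assumes g: "S_index I J \<in> C"
  shows "c (S_index I J) = 0"
proof (rule coefficient_zero[OF vanishes_test_S[of "Suc N" J I] g])
  have J: "J \<in> seqs \<Lambda>" and adm: "admissible (S_index I J)"
    using C_basis[OF g] by simp_all
  show "test_S (Suc N) (operator \<Lambda> \<Lambda>F (S_index I J)) J I \<noteq> 0"
    using test_S_opS[OF adm J] by simp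
  fix i assume i: "i \<in> C" "i \<noteq> S_index I J"
  show "c i * test_S (Suc N) (operator \<Lambda> \<Lambda>F i) J I = 0"
  proof (cases i)
    case (F_index l1 l2 I0 J0 l3 l4)
    then show ?thesis using C_short[OF i(1)] by (simp add: test_S_opF)
  next
    case (L_index l1 l2 I0 J0)
    then show ?thesis using C_short[OF i(1)] by (simp add: test_S_opL J)
  next
    case (R_index I0 J0 l1 l2)
    then show ?thesis
      using i(1) coefficient_R11_zero[of I0 J0] by (cases "l1 = 1 \<and> l2 = 1") (auto simp: test_S_opR_flavours)
  next
    case (S_index I0 J0)
    then show ?thesis using i C_basis[OF i(1)] by (auto simp: test_S_opS J)
  qed
qed

lemma coefficient_L_zero:
  assumes g: "L_index l1 l2 I J \<in> C"
  shows "c (L_index l1 l2 I J) = 0"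
proof (rule coefficient_zero[OF vanishes_test_L[of N l2 l1 J I] g])
  have J: "J \<in> seqs \<Lambda>" and l2: "l2 \<in> {1..\<Lambda>F}" and adm: "\<not> last_both_one I J"
    using C_basis[OF g] by simp_all
  show "test_L N l2 l1 (operator \<Lambda> \<Lambda>F (L_index l1 l2 I J)) J I \<noteq> 0"
    using test_L_opL[OF adm l2 J] by simp
  fix i assume i: "i \<in> C" "i \<noteq> L_index l1 l2 I J"
  show "c i * test_L N l2 l1 (operator \<Lambda> \<Lambda>F i) J I = 0"
  proof (cases i)
    case (F_index m1 m2 I0 J0 m3 m4)
    then show ?thesis using C_short[OF i(1)] by (simp add: test_L_opF)
  next
    case (L_index m1 m2 I0 J0)
    then have "\<not> last_both_one I0 J0" using C_basis[OF i(1)] by simp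
    then show ?thesis using i L_index by (auto simp: test_L_opL[OF _ l2 J])
  next
    case (R_index I0 J0 m1 m2)
    then show ?thesis
      using i(1) coefficient_R11_zero[of I0 J0] by (cases "m1 = 1 \<and> m2 = 1") (auto simp: test_L_opR_flavours)
  next
    case (S_index I0 J0)
    then show ?thesis using i(1) coefficient_S_zero by simp
  qed
qed

lemma coefficient_R_zero:
  assumes g: "R_index I J l1 l2 \<in> C"
  shows "c (R_index I J l1 l2) = 0"
proof (rule coefficient_zero[OF vanishes_test_R[of N l2 l1 J I] g])
  have J: "J \<in> seqs \<Lambda>" and l2: "l2 \<in> {1..\<Lambda>F}" and adm: "admissible (R_index I J l1 l2)"
    using C_basis[OF g] by simp_all
  show "test_R N l2 l1 (operator \<Lambda> \<Lambda>F (R_index I J l1 l2)) J I \<noteq> 0"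
    using test_R_opR[OF adm l2 J] by simp
  fix i assume i: "i \<in> C" "i \<noteq> R_index I J l1 l2"
  show "c i * test_R N l2 l1 (operator \<Lambda> \<Lambda>F i) J I = 0"
  proof (cases i)
    case (F_index m1 m2 I0 J0 m3 m4)
    then show ?thesis using C_short[OF i(1)] by (simp add: test_R_opF)
  next
    case (L_index m1 m2 I0 J0)
    then show ?thesis using i(1) coefficient_L_zero by simp
  next
    case (R_index I0 J0 m1 m2)
    then show ?thesis using i C_basis[OF i(1)] test_R_opR[OF _ l2 J, of I0 J0 m1 m2] by auto
  next
    case (S_index I0 J0)
    then show ?thesis using i(1) coefficient_S_zero by simp
  qed
qed

lemma coefficient_F_zero:
  assumes g: "F_index l1 l2 I J l3 l4 \<in> C"
  shows "c (F_index l1 l2 I J l3 l4) = 0"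
proof (rule coefficient_zero[OF vanishes_entry[of "(l2, J, l4)" "(l1, I, l3)"] g])
  have "valid \<Lambda> \<Lambda>F (l2, J, l4)"
    using C_basis[OF g] by (simp add: valid_iff)
  then show "operator \<Lambda> \<Lambda>F (F_index l1 l2 I J l3 l4) (l2, J, l4) (l1, I, l3) \<noteq> 0"
    by (simp add: opF_apply)
  fix i assume i: "i \<in> C" "i \<noteq> F_index l1 l2 I J l3 l4"
  show "c i * operator \<Lambda> \<Lambda>F i (l2, J, l4) (l1, I, l3) = 0"
  proof (cases i)
    case (F_index m1 m2 I0 J0 m3 m4)
    then show ?thesis using i by (auto simp: opF_apply)
  qed (use i(1) coefficient_L_zero coefficient_R_zero coefficient_S_zero in simp_all)
qed

lemma coefficients_zero: "i \<in> C \<Longrightarrow> c i = 0"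
  by (cases i) (simp_all add: coefficient_F_zero coefficient_L_zero coefficient_R_zero coefficient_S_zero)

end

theorem (in open_string_ranks) B4_independent: "\<not> Op.dependent (B4 \<Lambda> \<Lambda>F)"
proof
  assume "Op.dependent (B4 \<Lambda> \<Lambda>F)"
  then obtain t u v where t: "finite t" "t \<subseteq> B4 \<Lambda> \<Lambda>F" and sum_zero: "(\<Sum>v\<in>t. opscale (u v) v) = 0"
    and v: "v \<in> t" "u v \<noteq> 0"
    unfolding Op.dependent_explicit by blast
  obtain C where C: "C \<subseteq> {i. valid_index \<Lambda> \<Lambda>F i \<and> admissible i}" "inj_on (operator \<Lambda> \<Lambda>F) C"
    and t_eq: "t = operator \<Lambda> \<Lambda>F ` C"
    using t(2) unfolding B4_eq_image subset_image_inj by blast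
  have "finite C" using t(1) C(2) t_eq finite_image_iff by blast
  then obtain N where N: "\<forall>i\<in>C. length (input_word i) < N"
    using finite_nat_bounded[of "(\<lambda>i. length (input_word i)) ` C"] by auto
  have "(\<Sum>i\<in>C. u (operator \<Lambda> \<Lambda>F i) * operator \<Lambda> \<Lambda>F i x y) = 0" for x y
  proof -
    have "(\<Sum>v\<in>t. opscale (u v) v) x y = 0" using sum_zero by simp
    then show ?thesis by (simp add: t_eq sum.reindex[OF C(2)] sum_fun_apply opscale_def)
  qed
  then interpret B4_relation \<Lambda> \<Lambda>F C "\<lambda>i. u (operator \<Lambda> \<Lambda>F i)" N
    using \<open>finite C\<close> C(1) N by unfold_locales auto
  from v obtain i where "i \<in> C" "v = operator \<Lambda> \<Lambda>F i" unfolding t_eq by blast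
  then show False using v(2) coefficients_zero by simp
qed

theorem proposition2:
  fixes \<Lambda> \<Lambda>F :: nat
  assumes "\<Lambda> \<ge> 1" and "\<Lambda>F \<ge> 1"
  shows "\<not> module.dependent opscale (B4 \<Lambda> \<Lambda>F)
         \<and> module.span opscale (B4 \<Lambda> \<Lambda>F) = Ghat \<Lambda> \<Lambda>F"
proof -
  interpret open_string_ranks \<Lambda> \<Lambda>F
    using assms by unfold_locales
  show ?thesis using B4_independent span_B4 by simp
qed

end
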